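(* There is a universal constant $c$ such that the following holds. Let $T$ be a decision tree of depth $d$ computing a Boolean function $f:\{-1,1\}^n\to\{0,1\}$, and let $p=\Pr_x[f(x)=1]$ for uniform $x$. Then for every $\ell\le d$, $$\sum_{S\subseteq[n]:|S|=\ell}|\hat f(S)|\ \le\ \sqrt{c^{\ell}\binom{d}{\ell}}\cdot p\cdot\prod_{i=0}^{\ell-1}\sqrt{\log(4n^i/p)}.$$
   Context: Fourier coefficients: $\hat f(S)=\mathbb E_{x}[f(x)\prod_{i\in S}x_i]$ for $x$ uniform on $\{-1,1\}^n$. *)

theory Defs
  imports Complex_Main
begin

text \<open>Points of the Boolean cube {-1,1}^n, represented as functions nat => int that
  take values in {-1,1} on coordinates 0..n-1 and are fixed to 1 outside (canonical
  representatives, so that the cube is a finite set of size 2^n).\<close>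
definition cube :: "nat \<Rightarrow> (nat \<Rightarrow> int) set" where
  "cube n = {x. (\<forall>i<n. x i = -1 \<or> x i = 1) \<and> (\<forall>i\<ge>n. x i = 1)}"

definition cube_expect :: "nat \<Rightarrow> ((nat \<Rightarrow> int) \<Rightarrow> real) \<Rightarrow> real" where
  "cube_expect n g = (\<Sum>x\<in>cube n. g x) / 2 ^ n"

definition fourier_coeff :: "nat \<Rightarrow> ((nat \<Rightarrow> int) \<Rightarrow> real) \<Rightarrow> nat set \<Rightarrow> real" where
  "fourier_coeff n f S = cube_expect n (\<lambda>x. f x * (\<Prod>i\<in>S. real_of_int (x i)))"

datatype dtree = Leaf bool | Node nat dtree dtree

fun dt_eval :: "dtree \<Rightarrow> (nat \<Rightarrow> int) \<Rightarrow> real" where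
  "dt_eval (Leaf b) x = (if b then 1 else 0)"
| "dt_eval (Node i l r) x = (if x i = -1 then dt_eval l x else dt_eval r x)"

fun dt_depth :: "dtree \<Rightarrow> nat" where
  "dt_depth (Leaf b) = 0"
| "dt_depth (Node i l r) = Suc (max (dt_depth l) (dt_depth r))"

fun dt_vars :: "dtree \<Rightarrow> nat set" where
  "dt_vars (Leaf b) = {}"
| "dt_vars (Node i l r) = insert i (dt_vars l \<union> dt_vars r)"

definition dt_computes :: "nat \<Rightarrow> dtree \<Rightarrow> ((nat \<Rightarrow> int) \<Rightarrow> real) \<Rightarrow> bool" where
  "dt_computes n T f \<longleftrightarrow> dt_vars T \<subseteq> {..<n} \<and> (\<forall>x\<in>cube n. f x = dt_eval T x)"

end

theory Submission
  imports Defs "HOL-Library.FuncSet"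
begin

text \<open>
  A uniform point of the cube drives a random walk down the decision tree, and conditioned on
  the path to a leaf the unqueried coordinates are still uniform. Hence for signs \<open>s\<^sub>S\<close> the
  sum over \<open>|S| = l\<close> of \<open>s\<^sub>S fhat(S)\<close> is the expectation over the walk of the leaf value times
  \<open>G\<^sub>l\<close>, the degree-\<open>l\<close> part of \<open>\<Sum> s\<^sub>S x\<^sup>S\<close> in the queried variables, evaluated at the answers.
  Along the walk \<open>G\<^sub>l\<close> is a martingale whose increment at a query of \<open>x\<^sub>i\<close> is \<open>x\<^sub>i\<close> times a form
  of the same kind of degree \<open>l - 1\<close>. By induction on \<open>l\<close> one bounds \<open>E[w G\<^sub>l]\<close> by \<open>P \<beta>\<^sub>l(P)\<close>
  for every leaf weight \<open>w\<close> with values in [0,1] and \<open>P = E[w]\<close>. Increments below a threshold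
  \<open>M\<^sub>t\<close> at depth \<open>t\<close> are handled by an exponential-moment (entropy) inequality with an
  optimised exponent. For each depth \<open>t\<close>, variable and sign, the nodes where the increment
  exceeds \<open>M\<^sub>t\<close> have some mass \<open>q\<close>; the induction hypothesis on the tree truncated at depth \<open>t\<close>
  gives \<open>M\<^sub>t q \<le> q \<beta>\<^sub>l\<^sub>-\<^sub>1(q)\<close>, which forces \<open>q \<le> P / (2 n\<^sup>3)\<close>, so these nodes contribute
  at most \<open>P M\<^sub>t / (2 n\<^sup>3)\<close>; summed over at most \<open>n\<close> depths, \<open>n\<close> variables and two signs this
  is at most \<open>P \<beta>\<^sub>l(P) / 3\<close>.
\<close>

section \<open>The cube and its subcubes\<close>

lemma cube_eq_image:
  "cube n = (\<lambda>g i. if i < n then g i else 1) ` (PiE {..<n} (\<lambda>_. {-1,1::int}))"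
proof (rule set_eqI, rule iffI)
  fix x assume x: "x \<in> cube n"
  let ?g = "restrict x {..<n}"
  have "?g \<in> PiE {..<n} (\<lambda>_. {-1,1::int})" using x by (auto simp: cube_def)
  moreover have "x = (\<lambda>i. if i < n then ?g i else 1)" using x by (auto simp: cube_def)
  ultimately show "x \<in> (\<lambda>g i. if i < n then g i else 1) ` (PiE {..<n} (\<lambda>_. {-1,1::int}))" by blast
next
  fix x assume "x \<in> (\<lambda>g i. if i < n then g i else 1) ` (PiE {..<n} (\<lambda>_. {-1,1::int}))"
  then show "x \<in> cube n" by (auto simp: cube_def PiE_def Pi_def)
qed

lemma inj_on_cube_extend: "inj_on (\<lambda>g i. if i < n then g i else (1::int)) (PiE {..<n} (\<lambda>_. {-1,1::int}))"
proof (rule inj_onI)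
  fix g g' assume g: "g \<in> PiE {..<n} (\<lambda>_. {-1,1::int})" and g': "g' \<in> PiE {..<n} (\<lambda>_. {-1,1::int})"
    and e: "(\<lambda>i. if i < n then g i else (1::int)) = (\<lambda>i. if i < n then g' i else 1)"
  show "g = g'"
  proof
    fix i show "g i = g' i"
    proof (cases "i < n")
      case True then show ?thesis using fun_cong[OF e, of i] by simp
    next
      case False then show ?thesis using g g' by (auto simp: PiE_def extensional_def)
    qed
  qed
qed

lemma finite_cube: "finite (cube n)"
  by (simp add: cube_eq_image finite_PiE)

lemma card_cube: "card (cube n) = 2 ^ n"
  by (simp add: cube_eq_image card_image[OF inj_on_cube_extend] card_PiE numeral_2_eq_2)

type_synonym path = "(nat \<times> int) list"
  \<comment> \<open>the answers \<open>(i, x\<^sub>i)\<close> to the queries made so far, most recent first\<close>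

definition path_vars :: "path \<Rightarrow> nat set" where "path_vars h = fst ` set h"

definition path_point :: "path \<Rightarrow> nat \<Rightarrow> int" where
  "path_point h j = (case map_of h j of Some b \<Rightarrow> b | None \<Rightarrow> 1)"

definition subcube :: "nat \<Rightarrow> path \<Rightarrow> (nat \<Rightarrow> int) set" where
  "subcube n h = {x \<in> cube n. \<forall>p\<in>set h. x (fst p) = snd p}"

definition flip :: "nat \<Rightarrow> (nat \<Rightarrow> int) \<Rightarrow> (nat \<Rightarrow> int)" where
  "flip i x = x(i := - x i)"

lemma path_vars_Cons[simp]: "path_vars ((i,b)#h) = insert i (path_vars h)"
  by (simp add: path_vars_def)

lemma path_vars_Nil[simp]: "path_vars [] = {}" by (simp add: path_vars_def)

lemma finite_path_vars[simp]: "finite (path_vars h)" by (simp add: path_vars_def)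

lemma subcube_Nil[simp]: "subcube n [] = cube n" by (simp add: subcube_def)

lemma finite_subcube[simp]: "finite (subcube n h)"
  by (rule finite_subset[OF _ finite_cube[of n]]) (auto simp: subcube_def)

lemma flip_flip[simp]: "flip i (flip i x) = x" by (simp add: flip_def)

lemma flip_cube: "i < n \<Longrightarrow> x \<in> cube n \<Longrightarrow> flip i x \<in> cube n"
  by (auto simp: cube_def flip_def)

lemma subcube_split:
  assumes "i < n" "i \<notin> path_vars h"
  shows "subcube n h = subcube n ((i,-1)#h) \<union> subcube n ((i,1)#h)"
    and "subcube n ((i,-1)#h) \<inter> subcube n ((i,1)#h) = {}"
  using assms by (auto simp: subcube_def cube_def)

lemma bij_betw_flip_subcube:
  assumes "i < n" "i \<notin> path_vars h"
  shows "bij_betw (flip i) (subcube n ((i,-1)#h)) (subcube n ((i,1)#h))"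
proof (rule bij_betw_byWitness[where f'="flip i"])
  have agree: "\<And>p x. p \<in> set h \<Longrightarrow> flip i x (fst p) = x (fst p)"
    using assms(2) by (force simp: flip_def path_vars_def)
  show "\<forall>a\<in>subcube n ((i, - 1) # h). flip i (flip i a) = a" by simp
  show "\<forall>a\<in>subcube n ((i, 1) # h). flip i (flip i a) = a" by simp
  show "flip i ` subcube n ((i, - 1) # h) \<subseteq> subcube n ((i, 1) # h)"
    using assms agree by (auto simp: subcube_def flip_cube) (auto simp: flip_def)
  show "flip i ` subcube n ((i, 1) # h) \<subseteq> subcube n ((i, - 1) # h)"
    using assms agree by (auto simp: subcube_def flip_cube) (auto simp: flip_def)
qed

lemma sum_subcube_split:
  assumes "i < n" "i \<notin> path_vars h"
  shows "(\<Sum>x\<in>subcube n h. g x) = (\<Sum>x\<in>subcube n ((i,-1)#h). g x) + (\<Sum>x\<in>subcube n ((i,1)#h). g x)"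
  by (subst subcube_split(1)[OF assms], rule sum.union_disjoint) (auto simp: subcube_split(2)[OF assms])

lemma sum_subcube_flip:
  assumes "i < n" "i \<notin> path_vars h"
  shows "(\<Sum>x\<in>subcube n ((i,1)#h). g x) = (\<Sum>x\<in>subcube n ((i,-1)#h). g (flip i x))"
  using sum.reindex_bij_betw[OF bij_betw_flip_subcube[OF assms], of g] by simp

lemma card_subcube_flip:
  assumes "i < n" "i \<notin> path_vars h"
  shows "card (subcube n ((i,1)#h)) = card (subcube n ((i,-1)#h))"
  using bij_betw_same_card[OF bij_betw_flip_subcube[OF assms]] by simp

lemma card_subcube_split:
  assumes "i < n" "i \<notin> path_vars h"
  shows "card (subcube n h) = card (subcube n ((i,-1)#h)) + card (subcube n ((i,1)#h))"
  using sum_subcube_split[OF assms, of "\<lambda>_. 1::nat"] by simp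

lemma path_point_mem: "j \<in> path_vars h \<Longrightarrow> (j, path_point h j) \<in> set h"
  using map_of_eq_None_iff[of h j]
  by (cases "map_of h j") (auto simp: path_vars_def path_point_def dest: map_of_SomeD)

lemma path_point_notin: "j \<notin> path_vars h \<Longrightarrow> path_point h j = 1"
  using map_of_eq_None_iff[of h j] by (simp add: path_point_def path_vars_def)

lemma subcube_eq_path_point: "x \<in> subcube n h \<Longrightarrow> j \<in> path_vars h \<Longrightarrow> x j = path_point h j"
  using path_point_mem[of j h] by (force simp: subcube_def)

lemma path_point_in_subcube:
  assumes "distinct (map fst h)" "path_vars h \<subseteq> {..<n}" "snd ` set h \<subseteq> {-1,1}"
  shows "path_point h \<in> subcube n h"
proof -
  have "\<And>p. p \<in> set h \<Longrightarrow> path_point h (fst p) = snd p"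
    using assms(1) by (auto simp: path_point_def)
  moreover have "path_point h \<in> cube n"
  proof -
    have "\<And>j. j \<in> path_vars h \<Longrightarrow> path_point h j = -1 \<or> path_point h j = 1"
    proof -
      fix j assume "j \<in> path_vars h"
      then obtain b where "map_of h j = Some b"
        by (metis path_vars_def image_iff option.exhaust map_of_eq_None_iff)
      then show "path_point h j = -1 \<or> path_point h j = 1" using assms(3) by (force simp: path_point_def dest: map_of_SomeD)
    qed
    moreover have "\<And>j. j \<notin> path_vars h \<Longrightarrow> path_point h j = 1"
    proof -
      fix j assume "j \<notin> path_vars h"
      then have "map_of h j = None" by (simp add: path_vars_def map_of_eq_None_iff)
      then show "path_point h j = 1" by (simp add: path_point_def)
    qed
    moreover have "\<And>j. n \<le> j \<Longrightarrow> j \<notin> path_vars h" using assms(2) by auto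
    ultimately show ?thesis unfolding cube_def by auto
  qed
  ultimately show ?thesis by (auto simp: subcube_def)
qed

section \<open>Random walks down a decision tree\<close>

fun walk_exp :: "dtree \<Rightarrow> path \<Rightarrow> (path \<Rightarrow> bool \<Rightarrow> real) \<Rightarrow> real" where
  "walk_exp (Leaf b) h F = F h b"
| "walk_exp (Node i L R) h F = (walk_exp L ((i,-1)#h) F + walk_exp R ((i,1)#h) F) / 2"

lemma walk_exp_cong: "(\<And>ext b. F (ext @ h) b = F' (ext @ h) b) \<Longrightarrow> walk_exp T h F = walk_exp T h F'"
proof (induction T arbitrary: h)
  case (Leaf b) then show ?case using Leaf[of "[]"] by simp
next
  case (Node i L R)
  have "walk_exp L ((i,-1)#h) F = walk_exp L ((i,-1)#h) F'"
    by (rule Node.IH(1)) (metis Node.prems append.assoc append_Cons append_Nil)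
  moreover have "walk_exp R ((i,1)#h) F = walk_exp R ((i,1)#h) F'"
    by (rule Node.IH(2)) (metis Node.prems append.assoc append_Cons append_Nil)
  ultimately show ?case by simp
qed

lemma walk_exp_nonneg: "(\<And>h b. 0 \<le> F h b) \<Longrightarrow> 0 \<le> walk_exp T h F"
  by (induction T arbitrary: h) auto

lemma walk_exp_le_1:
  assumes "\<And>h b. F h b \<le> 1" shows "walk_exp T h F \<le> 1"
proof (induction T arbitrary: h)
  case (Leaf b) then show ?case using assms by simp
next
  case (Node i L R)
  have "walk_exp L ((i,-1)#h) F \<le> 1" "walk_exp R ((i,1)#h) F \<le> 1" using Node.IH by auto
  then show ?case by simp
qed

lemma walk_exp_cmult: "walk_exp T h (\<lambda>h b. c * F h b) = c * walk_exp T h F"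
  by (induction T arbitrary: h) (auto simp: field_simps)

lemma walk_exp_mono: "(\<And>h b. F h b \<le> F' h b) \<Longrightarrow> walk_exp T h F \<le> walk_exp T h F'"
  by (induction T arbitrary: h) (auto intro: add_mono divide_right_mono)

lemma walk_exp_weight_zero:
  assumes "\<And>h b. 0 \<le> w h b" "walk_exp T h w = 0"
  shows "walk_exp T h (\<lambda>h b. w h b * g h b) = 0"
  using assms(2)
proof (induction T arbitrary: h)
  case (Leaf b) then show ?case by simp
next
  case (Node i L R)
  have "0 \<le> walk_exp L ((i,-1)#h) w" "0 \<le> walk_exp R ((i,1)#h) w" using assms(1) by (auto intro: walk_exp_nonneg)
  then have "walk_exp L ((i,-1)#h) w = 0" "walk_exp R ((i,1)#h) w = 0" using Node.prems by auto
  then show ?case using Node.IH by simp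
qed

fun nonrepeating :: "dtree \<Rightarrow> bool" where
  "nonrepeating (Leaf b) = True"
| "nonrepeating (Node i L R) = (i \<notin> dt_vars L \<and> i \<notin> dt_vars R \<and> nonrepeating L \<and> nonrepeating R)"

lemma finite_dt_vars[simp]: "finite (dt_vars T)"
  by (induction T) auto

lemma nonrepeating_depth_le_card: "nonrepeating T \<Longrightarrow> dt_depth T \<le> card (dt_vars T)"
proof (induction T)
  case (Leaf b) then show ?case by simp
next
  case (Node i L R)
  have "card (dt_vars L) \<le> card (dt_vars L \<union> dt_vars R)" "card (dt_vars R) \<le> card (dt_vars L \<union> dt_vars R)"
    by (auto intro: card_mono)
  then show ?case using Node by (auto simp: card_insert_if)
qed

lemma walk_exp_cong_on_paths:
  assumes "nonrepeating T"
    and "\<And>ext b. distinct (map fst ext) \<Longrightarrow> fst ` set ext \<subseteq> dt_vars T \<Longrightarrow>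
            snd ` set ext \<subseteq> {-1,1} \<Longrightarrow> F (ext @ h) b = F' (ext @ h) b"
  shows "walk_exp T h F = walk_exp T h F'"
  using assms
proof (induction T arbitrary: h)
  case (Leaf b)
  then show ?case using Leaf.prems(2)[of "[]"] by simp
next
  case (Node i L R)
  have "walk_exp L ((i,-1)#h) F = walk_exp L ((i,-1)#h) F'"
  proof (rule Node.IH(1))
    show "nonrepeating L" using Node.prems by simp
    fix ext :: path and b
    assume "distinct (map fst ext)" "fst ` set ext \<subseteq> dt_vars L" "snd ` set ext \<subseteq> {-1,1}"
    then have "F ((ext @ [(i,-1)]) @ h) b = F' ((ext @ [(i,-1)]) @ h) b"
      using Node.prems by (intro Node.prems(2)) auto
    then show "F (ext @ (i,-1) # h) b = F' (ext @ (i,-1) # h) b" by simp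
  qed
  moreover have "walk_exp R ((i,1)#h) F = walk_exp R ((i,1)#h) F'"
  proof (rule Node.IH(2))
    show "nonrepeating R" using Node.prems by simp
    fix ext :: path and b
    assume "distinct (map fst ext)" "fst ` set ext \<subseteq> dt_vars R" "snd ` set ext \<subseteq> {-1,1}"
    then have "F ((ext @ [(i,1)]) @ h) b = F' ((ext @ [(i,1)]) @ h) b"
      using Node.prems by (intro Node.prems(2)) auto
    then show "F (ext @ (i,1) # h) b = F' (ext @ (i,1) # h) b" by simp
  qed
  ultimately show ?case by simp
qed

fun prune :: "dtree \<Rightarrow> path \<Rightarrow> dtree" where
  "prune (Leaf b) h = Leaf b"
| "prune (Node i L R) h = (case map_of h i of
     Some b \<Rightarrow> (if b = -1 then prune L h else prune R h)
   | None \<Rightarrow> Node i (prune L ((i,-1)#h)) (prune R ((i,1)#h)))"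

lemma prune_vars: "dt_vars (prune T h) \<subseteq> dt_vars T - path_vars h"
proof (induction T arbitrary: h)
  case (Leaf b) then show ?case by simp
next
  case (Node i L R)
  show ?case
  proof (cases "map_of h i")
    case None
    then have "i \<notin> path_vars h" by (simp add: path_vars_def map_of_eq_None_iff)
    then show ?thesis using None Node.IH[of "(i,-1)#h"] Node.IH[of "(i,1)#h"] by auto
  next
    case (Some b)
    then show ?thesis using Node.IH[of h] by auto
  qed
qed

lemma nonrepeating_prune: "nonrepeating (prune T h)"
proof (induction T arbitrary: h)
  case (Leaf b) then show ?case by simp
next
  case (Node i L R)
  show ?case
  proof (cases "map_of h i")
    case None
    then show ?thesis using Node.IH prune_vars[of L "(i,-1)#h"] prune_vars[of R "(i,1)#h"] by auto
  next
    case (Some b)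
    then show ?thesis using Node.IH by auto
  qed
qed

lemma prune_depth: "dt_depth (prune T h) \<le> dt_depth T"
proof (induction T arbitrary: h)
  case (Leaf b) then show ?case by simp
next
  case (Node i L R)
  show ?case
  proof (cases "map_of h i")
    case None
    have "dt_depth (prune L ((i,-1)#h)) \<le> dt_depth L" "dt_depth (prune R ((i,1)#h)) \<le> dt_depth R"
      using Node.IH by auto
    then have "max (dt_depth (prune L ((i,-1)#h))) (dt_depth (prune R ((i,1)#h))) \<le> max (dt_depth L) (dt_depth R)"
      by (rule max.mono)
    then show ?thesis using None by simp
  next
    case (Some b)
    have "dt_depth (prune L h) \<le> dt_depth L" "dt_depth (prune R h) \<le> dt_depth R"
      using Node.IH by auto
    moreover have "dt_depth L \<le> Suc (max (dt_depth L) (dt_depth R))" "dt_depth R \<le> Suc (max (dt_depth L) (dt_depth R))"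
      by auto
    ultimately show ?thesis using Some by auto
  qed
qed

lemma prune_eval:
  assumes "\<forall>j. x j = -1 \<or> x j = 1" "\<forall>p\<in>set h. x (fst p) = snd p"
  shows "dt_eval (prune T h) x = dt_eval T x"
  using assms(2)
proof (induction T arbitrary: h)
  case (Leaf b) then show ?case by simp
next
  case (Node i L R)
  show ?case
  proof (cases "map_of h i")
    case None
    show ?thesis
    proof (cases "x i = -1")
      case True
      then show ?thesis using None Node.IH(1)[of "(i,-1)#h"] Node.prems by auto
    next
      case False
      then have "x i = 1" using assms(1) by metis
      then show ?thesis using None Node.IH(2)[of "(i,1)#h"] Node.prems by auto
    qed
  next
    case (Some b)
    then have "(i,b) \<in> set h" by (rule map_of_SomeD)
    then have "x i = b" using Node.prems by force
    then show ?thesis using Some Node.IH(1)[of h] Node.IH(2)[of h] Node.prems by auto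
  qed
qed

definition subcube_avg :: "nat \<Rightarrow> path \<Rightarrow> ((nat \<Rightarrow> int) \<Rightarrow> real) \<Rightarrow> real" where
  "subcube_avg n h g = (\<Sum>x\<in>subcube n h. g x) / card (subcube n h)"

lemma sum_subcube_dt_eval:
  assumes "nonrepeating T" "dt_vars T \<subseteq> {..<n}" "dt_vars T \<inter> path_vars h = {}"
  shows "(\<Sum>x\<in>subcube n h. dt_eval T x * g x)
       = card (subcube n h) * walk_exp T h (\<lambda>h' b. (if b then 1 else 0) * subcube_avg n h' g)"
  using assms
proof (induction T arbitrary: h)
  case (Leaf b)
  show ?case
  proof (cases "card (subcube n h) = 0")
    case True
    then have "subcube n h = {}" by simp
    then show ?thesis by simp
  next
    case False
    then show ?thesis by (simp add: subcube_avg_def sum_distrib_left[symmetric])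
  qed
next
  case (Node i L R)
  have i: "i < n" "i \<notin> path_vars h" using Node.prems by auto
  have IL: "(\<Sum>x\<in>subcube n ((i,-1)#h). dt_eval L x * g x)
       = card (subcube n ((i,-1)#h)) * walk_exp L ((i,-1)#h) (\<lambda>h' b. (if b then 1 else 0) * subcube_avg n h' g)"
    using Node.prems by (intro Node.IH(1)) auto
  have IR: "(\<Sum>x\<in>subcube n ((i,1)#h). dt_eval R x * g x)
       = card (subcube n ((i,1)#h)) * walk_exp R ((i,1)#h) (\<lambda>h' b. (if b then 1 else 0) * subcube_avg n h' g)"
    using Node.prems by (intro Node.IH(2)) auto
  have e1: "(\<Sum>x\<in>subcube n ((i,-1)#h). dt_eval (Node i L R) x * g x) = (\<Sum>x\<in>subcube n ((i,-1)#h). dt_eval L x * g x)"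
    by (rule sum.cong) (auto simp: subcube_def)
  have e2: "(\<Sum>x\<in>subcube n ((i,1)#h). dt_eval (Node i L R) x * g x) = (\<Sum>x\<in>subcube n ((i,1)#h). dt_eval R x * g x)"
    by (rule sum.cong) (auto simp: subcube_def)
  show ?case
    using sum_subcube_split[OF i, of "\<lambda>x. dt_eval (Node i L R) x * g x"] e1 e2 IL IR
      card_subcube_split[OF i] card_subcube_flip[OF i]
    by (simp add: field_simps)
qed

section \<open>Fourier weights along the walk\<close>

definition deg_part :: "nat \<Rightarrow> (nat set \<Rightarrow> real) \<Rightarrow> nat set \<Rightarrow> (nat \<Rightarrow> int) \<Rightarrow> real" where
  "deg_part k s V x = (\<Sum>S\<in>{S. S \<subseteq> V \<and> card S = k}. s S * (\<Prod>j\<in>S. real_of_int (x j)))"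

lemma deg_part_cong: "(\<And>j. j \<in> V \<Longrightarrow> x j = y j) \<Longrightarrow> deg_part k s V x = deg_part k s V y"
  unfolding deg_part_def by (intro sum.cong refl arg_cong2[where f="(*)"] prod.cong) auto

lemma deg_part_0: "finite V \<Longrightarrow> deg_part 0 s V x = s {}"
proof -
  assume "finite V"
  then have "{S. S \<subseteq> V \<and> card S = 0} = {{}}" by (auto dest: finite_subset)
  then show ?thesis by (simp add: deg_part_def)
qed

lemma subsets_card_Suc_insert:
  assumes "finite V" "i \<notin> V"
  shows "{S. S \<subseteq> insert i V \<and> card S = Suc k}
    = {S. S \<subseteq> V \<and> card S = Suc k} \<union> insert i ` {S. S \<subseteq> V \<and> card S = k}"
proof (intro set_eqI iffI)
  fix S assume S: "S \<in> {S. S \<subseteq> insert i V \<and> card S = Suc k}"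
  then have "finite S" using assms(1) finite_subset by auto
  show "S \<in> {S. S \<subseteq> V \<and> card S = Suc k} \<union> insert i ` {S. S \<subseteq> V \<and> card S = k}"
  proof (cases "i \<in> S")
    case True
    then have "S = insert i (S - {i})" "S - {i} \<in> {S. S \<subseteq> V \<and> card S = k}"
      using S \<open>finite S\<close> by auto
    then show ?thesis by blast
  qed (use S in auto)
next
  fix S assume "S \<in> {S. S \<subseteq> V \<and> card S = Suc k} \<union> insert i ` {S. S \<subseteq> V \<and> card S = k}"
  then show "S \<in> {S. S \<subseteq> insert i V \<and> card S = Suc k}"
    using assms finite_subset by (auto simp: card_insert_if)
qed

lemma deg_part_insert:
  assumes "finite V" "i \<notin> V"
  shows "deg_part (Suc k) s (insert i V) x
    = deg_part (Suc k) s V x + real_of_int (x i) * deg_part k (\<lambda>S. s (insert i S)) V x"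
proof -
  let ?A = "{S. S \<subseteq> V \<and> card S = Suc k}" and ?B = "{S. S \<subseteq> V \<and> card S = k}"
  have "inj_on (insert i) ?B" "?A \<inter> insert i ` ?B = {}"
    using assms(2) by (auto intro!: inj_onI)
  then have "deg_part (Suc k) s (insert i V) x = deg_part (Suc k) s V x
      + (\<Sum>S\<in>?B. s (insert i S) * (\<Prod>j\<in>insert i S. real_of_int (x j)))"
    unfolding deg_part_def subsets_card_Suc_insert[OF assms]
    using assms(1) by (simp add: sum.union_disjoint sum.reindex)
  also have "(\<Sum>S\<in>?B. s (insert i S) * (\<Prod>j\<in>insert i S. real_of_int (x j)))
      = real_of_int (x i) * deg_part k (\<lambda>S. s (insert i S)) V x"
    unfolding deg_part_def sum_distrib_left
  proof (intro sum.cong refl)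
    fix S assume "S \<in> ?B"
    then have "finite S" "i \<notin> S" using assms finite_subset by auto
    then show "s (insert i S) * (\<Prod>j\<in>insert i S. real_of_int (x j))
        = real_of_int (x i) * (s (insert i S) * (\<Prod>j\<in>S. real_of_int (x j)))" by simp
  qed
  finally show ?thesis .
qed

lemma sum_subcube_odd:
  assumes "i < n" "i \<notin> path_vars h" "\<And>x. g (flip i x) = g x"
  shows "(\<Sum>x\<in>subcube n h. real_of_int (x i) * g x) = 0"
proof -
  have "(\<Sum>x\<in>subcube n ((i,1)#h). real_of_int (x i) * g x) = (\<Sum>x\<in>subcube n ((i,-1)#h). - (real_of_int (x i) * g x))"
    unfolding sum_subcube_flip[OF assms(1,2)] using assms(3) by (intro sum.cong) (auto simp: flip_def)
  then show ?thesis unfolding sum_subcube_split[OF assms(1,2)] by (simp add: sum_negf)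
qed

lemma sum_subcube_deg_part_aux:
  assumes "finite F"
  shows "F \<subseteq> {..<n} \<Longrightarrow> F \<inter> path_vars h = {} \<Longrightarrow>
    (\<Sum>x\<in>subcube n h. deg_part k s (path_vars h \<union> F) x) = card (subcube n h) * deg_part k s (path_vars h) (path_point h)"
  using assms
proof (induction F arbitrary: k s rule: finite_induct)
  case empty
  have "(\<Sum>x\<in>subcube n h. deg_part k s (path_vars h) x) = (\<Sum>x\<in>subcube n h. deg_part k s (path_vars h) (path_point h))"
    by (intro sum.cong refl deg_part_cong) (auto intro: subcube_eq_path_point)
  then show ?case by simp
next
  case (insert i F)
  have i: "i < n" "i \<notin> path_vars h" using insert.prems by auto
  show ?case
  proof (cases k)
    case 0
    have "(\<Sum>x\<in>subcube n h. deg_part k s (path_vars h \<union> insert i F) x) = (\<Sum>x\<in>subcube n h. s {})"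
      using insert.hyps 0 by (intro sum.cong refl) (simp add: deg_part_0)
    then show ?thesis using 0 by (simp add: deg_part_0)
  next
    case (Suc k')
    have V: "path_vars h \<union> insert i F = insert i (path_vars h \<union> F)" by auto
    have iV: "i \<notin> path_vars h \<union> F" using i insert.hyps by auto
    have "(\<Sum>x\<in>subcube n h. deg_part k s (path_vars h \<union> insert i F) x)
       = (\<Sum>x\<in>subcube n h. deg_part k s (path_vars h \<union> F) x) + (\<Sum>x\<in>subcube n h. real_of_int (x i) * deg_part k' (\<lambda>S. s (insert i S)) (path_vars h \<union> F) x)"
      unfolding V Suc using deg_part_insert[OF _ iV] insert.hyps by (simp add: sum.distrib)
    also have "(\<Sum>x\<in>subcube n h. real_of_int (x i) * deg_part k' (\<lambda>S. s (insert i S)) (path_vars h \<union> F) x) = 0"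
      by (rule sum_subcube_odd[OF i]) (rule deg_part_cong, use iV in \<open>auto simp: flip_def\<close>)
    finally show ?thesis using insert by simp
  qed
qed

lemma sum_subcube_deg_part:
  assumes "path_vars h \<subseteq> {..<n}"
  shows "(\<Sum>x\<in>subcube n h. deg_part k s {..<n} x) = card (subcube n h) * deg_part k s (path_vars h) (path_point h)"
proof -
  have "{..<n} = path_vars h \<union> ({..<n} - path_vars h)" using assms by auto
  then show ?thesis using sum_subcube_deg_part_aux[of "{..<n} - path_vars h" n h k s] by auto
qed

lemma sum_cube_dt_eval_deg_part:
  assumes "nonrepeating T" "dt_vars T \<subseteq> {..<n}"
  shows "(\<Sum>x\<in>cube n. dt_eval T x * deg_part k s {..<n} x)
     = 2 ^ n * walk_exp T [] (\<lambda>h b. (if b then 1 else 0) * deg_part k s (path_vars h) (path_point h))"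
proof -
  have "(\<Sum>x\<in>cube n. dt_eval T x * deg_part k s {..<n} x)
     = card (subcube n []) * walk_exp T [] (\<lambda>h' b. (if b then 1 else 0) * subcube_avg n h' (deg_part k s {..<n}))"
    using sum_subcube_dt_eval[OF assms, of "[]"] by simp
  also have "walk_exp T [] (\<lambda>h' b. (if b then 1 else 0) * subcube_avg n h' (deg_part k s {..<n}))
      = walk_exp T [] (\<lambda>h b. (if b then 1 else 0) * deg_part k s (path_vars h) (path_point h))"
  proof (rule walk_exp_cong_on_paths[OF assms(1)])
    fix ext :: path and b
    assume a: "distinct (map fst ext)" "fst ` set ext \<subseteq> dt_vars T" "snd ` set ext \<subseteq> {-1,1}"
    have hvs: "path_vars (ext @ []) \<subseteq> {..<n}" using a(2) assms(2) by (auto simp: path_vars_def)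
    have "path_point (ext @ []) \<in> subcube n (ext @ [])" using a hvs by (intro path_point_in_subcube) auto
    then have "card (subcube n (ext @ [])) \<noteq> 0" by (metis card_0_eq empty_iff finite_subcube)
    then show "(if b then 1 else 0) * subcube_avg n (ext @ []) (deg_part k s {..<n}) =
         (if b then 1 else 0) * deg_part k s (path_vars (ext @ [])) (path_point (ext @ []))"
      unfolding subcube_avg_def sum_subcube_deg_part[OF hvs] by simp
  qed
  finally show ?thesis by (simp add: card_cube)
qed

section \<open>The martingale along the walk\<close>

text \<open>\<open>edge_sum T h w \<phi>\<close> is the expectation over the walk of \<open>w\<close> at the leaf times the sum of
  \<open>\<phi> h' i b\<close> over the steps of the walk, where \<open>h'\<close> is the path before the step answering \<open>x\<^sub>i = b\<close>.\<close>

fun edge_sum :: "dtree \<Rightarrow> path \<Rightarrow> (path \<Rightarrow> bool \<Rightarrow> real) \<Rightarrow> (path \<Rightarrow> nat \<Rightarrow> int \<Rightarrow> real) \<Rightarrow> real" where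
  "edge_sum (Leaf b) h w \<phi> = 0"
| "edge_sum (Node i L R) h w \<phi> = (walk_exp L ((i,-1)#h) w * \<phi> h i (-1) + edge_sum L ((i,-1)#h) w \<phi>
      + walk_exp R ((i,1)#h) w * \<phi> h i 1 + edge_sum R ((i,1)#h) w \<phi>) / 2"

lemma edge_sum_add: "edge_sum T h w (\<lambda>h i b. \<phi> h i b + \<psi> h i b) = edge_sum T h w \<phi> + edge_sum T h w \<psi>"
  by (induction T arbitrary: h) (auto simp: field_simps)

lemma edge_sum_cmult: "edge_sum T h w (\<lambda>h i b. c * \<phi> h i b) = c * edge_sum T h w \<phi>"
  by (induction T arbitrary: h) (auto simp: field_simps)

lemma edge_sum_mono:
  assumes "\<And>h b. 0 \<le> w h b" "\<And>h i. \<phi> h i (-1) \<le> \<psi> h i (-1)" "\<And>h i. \<phi> h i 1 \<le> \<psi> h i 1"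
  shows "edge_sum T h w \<phi> \<le> edge_sum T h w \<psi>"
proof (induction T arbitrary: h)
  case (Leaf b) then show ?case by simp
next
  case (Node i L R)
  have "walk_exp L ((i,-1)#h) w * \<phi> h i (-1) \<le> walk_exp L ((i,-1)#h) w * \<psi> h i (-1)"
    using assms by (intro mult_left_mono walk_exp_nonneg) auto
  moreover have "walk_exp R ((i,1)#h) w * \<phi> h i 1 \<le> walk_exp R ((i,1)#h) w * \<psi> h i 1"
    using assms by (intro mult_left_mono walk_exp_nonneg) auto
  ultimately show ?case using Node.IH[of "(i,-1)#h"] Node.IH[of "(i,1)#h"] by simp
qed

lemma edge_sum_le_depth:
  assumes "\<And>h b. 0 \<le> w h b" "\<And>t. 0 \<le> \<psi> t" "\<And>h' i b. \<phi> h' i b \<le> \<psi> (length h')"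
  shows "edge_sum T h w \<phi> \<le> walk_exp T h w * (\<Sum>t\<in>{length h..<length h + dt_depth T}. \<psi> t)"
proof (induction T arbitrary: h)
  case (Leaf b) then show ?case by simp
next
  case (Node i L R)
  let ?m = "max (dt_depth L) (dt_depth R)"
  let ?S = "\<Sum>t\<in>{Suc (length h)..<Suc (length h) + ?m}. \<psi> t"
  have sL: "(\<Sum>t\<in>{Suc (length h)..<Suc (length h) + dt_depth L}. \<psi> t) \<le> ?S"
    using assms(2) by (intro sum_mono2) auto
  have sR: "(\<Sum>t\<in>{Suc (length h)..<Suc (length h) + dt_depth R}. \<psi> t) \<le> ?S"
    using assms(2) by (intro sum_mono2) auto
  have eL: "0 \<le> walk_exp L ((i,-1)#h) w" and eR: "0 \<le> walk_exp R ((i,1)#h) w" using assms(1) by (auto intro: walk_exp_nonneg)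
  have pL: "edge_sum L ((i,-1)#h) w \<phi> \<le> walk_exp L ((i,-1)#h) w * ?S"
    using Node.IH(1)[of "(i,-1)#h"] mult_left_mono[OF sL eL] by simp
  have pR: "edge_sum R ((i,1)#h) w \<phi> \<le> walk_exp R ((i,1)#h) w * ?S"
    using Node.IH(2)[of "(i,1)#h"] mult_left_mono[OF sR eR] by simp
  have fL: "walk_exp L ((i,-1)#h) w * \<phi> h i (-1) \<le> walk_exp L ((i,-1)#h) w * \<psi> (length h)"
    using assms(3) eL by (intro mult_left_mono) auto
  have fR: "walk_exp R ((i,1)#h) w * \<phi> h i 1 \<le> walk_exp R ((i,1)#h) w * \<psi> (length h)"
    using assms(3) eR by (intro mult_left_mono) auto
  have split: "(\<Sum>t\<in>{length h..<length h + dt_depth (Node i L R)}. \<psi> t) = \<psi> (length h) + ?S"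
  proof -
    have "{length h..<length h + dt_depth (Node i L R)} = insert (length h) {Suc (length h)..<Suc (length h) + ?m}"
      by auto
    then show ?thesis by simp
  qed
  have "edge_sum (Node i L R) h w \<phi> \<le> (walk_exp L ((i,-1)#h) w * \<psi> (length h) + walk_exp L ((i,-1)#h) w * ?S
        + walk_exp R ((i,1)#h) w * \<psi> (length h) + walk_exp R ((i,1)#h) w * ?S) / 2"
    using pL pR fL fR by simp
  also have "\<dots> = walk_exp (Node i L R) h w * (\<psi> (length h) + ?S)" by (simp add: field_simps)
  finally show ?case unfolding split .
qed

definition path_deg_part :: "nat \<Rightarrow> (nat set \<Rightarrow> real) \<Rightarrow> path \<Rightarrow> real" where
  "path_deg_part k s h = deg_part k s (path_vars h) (path_point h)"

lemma path_point_Cons_other: "j \<noteq> i \<Longrightarrow> path_point ((i,b)#h) j = path_point h j"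
  by (simp add: path_point_def)

lemma path_point_Cons_same: "path_point ((i,b)#h) i = b"
  by (simp add: path_point_def)

lemma path_deg_part_Cons:
  assumes "i \<notin> path_vars h"
  shows "path_deg_part (Suc k) s ((i,b)#h) = path_deg_part (Suc k) s h + real_of_int b * path_deg_part k (\<lambda>S. s (insert i S)) h"
proof -
  have "path_deg_part (Suc k) s ((i,b)#h) = deg_part (Suc k) s (insert i (path_vars h)) (path_point ((i,b)#h))"
    by (simp add: path_deg_part_def)
  also have "\<dots> = deg_part (Suc k) s (path_vars h) (path_point ((i,b)#h)) + real_of_int b * deg_part k (\<lambda>S. s (insert i S)) (path_vars h) (path_point ((i,b)#h))"
    using deg_part_insert[OF finite_path_vars assms] by (simp add: path_point_Cons_same)
  also have "deg_part (Suc k) s (path_vars h) (path_point ((i,b)#h)) = deg_part (Suc k) s (path_vars h) (path_point h)"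
    using assms by (intro deg_part_cong) (metis path_point_Cons_other)
  also have "deg_part k (\<lambda>S. s (insert i S)) (path_vars h) (path_point ((i,b)#h)) = deg_part k (\<lambda>S. s (insert i S)) (path_vars h) (path_point h)"
    using assms by (intro deg_part_cong) (metis path_point_Cons_other)
  finally show ?thesis by (simp add: path_deg_part_def)
qed

lemma path_deg_part_Nil: "path_deg_part (Suc k) s [] = 0"
proof -
  have e: "{S. S \<subseteq> path_vars [] \<and> card S = Suc k} = {}" by auto
  show ?thesis unfolding path_deg_part_def deg_part_def e by simp
qed

lemma path_deg_part_0: "path_deg_part 0 s h = s {}"
  by (simp add: path_deg_part_def deg_part_0)

lemma path_deg_part_cmult: "path_deg_part k (\<lambda>S. c * s S) h = c * path_deg_part k s h"
  by (simp add: path_deg_part_def deg_part_def sum_distrib_left mult.assoc)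

lemma walk_exp_deg_part_martingale:
  assumes "nonrepeating T" "dt_vars T \<inter> path_vars h = {}"
  shows "walk_exp T h (\<lambda>h' b. w h' b * path_deg_part (Suc k) s h')
       = walk_exp T h w * path_deg_part (Suc k) s h + edge_sum T h w (\<lambda>h i b. real_of_int b * path_deg_part k (\<lambda>S. s (insert i S)) h)"
  using assms
proof (induction T arbitrary: h)
  case (Leaf b) then show ?case by simp
next
  case (Node i L R)
  have i: "i \<notin> path_vars h" using Node.prems by auto
  have IL: "walk_exp L ((i,-1)#h) (\<lambda>h' b. w h' b * path_deg_part (Suc k) s h')
     = walk_exp L ((i,-1)#h) w * path_deg_part (Suc k) s ((i,-1)#h) + edge_sum L ((i,-1)#h) w (\<lambda>h i b. real_of_int b * path_deg_part k (\<lambda>S. s (insert i S)) h)"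
    using Node.prems by (intro Node.IH(1)) auto
  have IR: "walk_exp R ((i,1)#h) (\<lambda>h' b. w h' b * path_deg_part (Suc k) s h')
     = walk_exp R ((i,1)#h) w * path_deg_part (Suc k) s ((i,1)#h) + edge_sum R ((i,1)#h) w (\<lambda>h i b. real_of_int b * path_deg_part k (\<lambda>S. s (insert i S)) h)"
    using Node.prems by (intro Node.IH(2)) auto
  show ?case using IL IR path_deg_part_Cons[OF i, of k s "-1"] path_deg_part_Cons[OF i, of k s 1]
    by (simp add: field_simps)
qed

section \<open>An exponential-moment inequality\<close>

lemma exp_add_exp_minus_le:
  fixes t :: real
  shows "exp t + exp (- t) \<le> 2 * exp (t\<^sup>2)"
proof -
  have key: "exp t + exp (- t) \<le> 2 * exp (t\<^sup>2)" if t: "0 \<le> t" for t :: real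
  proof (cases "t \<le> 1")
    case True
    have "(1 + t) * (1 - t + t\<^sup>2) \<ge> 1" using t by (simp add: algebra_simps power2_eq_square)
    moreover have "exp t \<ge> 1 + t" by simp
    moreover have "0 \<le> 1 - t + t\<^sup>2" using True t by simp
    ultimately have "exp t * (1 - t + t\<^sup>2) \<ge> 1"
      using mult_right_mono[of "1 + t" "exp t" "1 - t + t\<^sup>2"] by linarith
    then have "exp (- t) \<le> 1 - t + t\<^sup>2" by (simp add: exp_minus field_simps)
    moreover have "exp t \<le> 1 + t + t\<^sup>2" using exp_bound[OF t True] .
    moreover have "1 + t\<^sup>2 \<le> exp (t\<^sup>2)" by simp
    ultimately show ?thesis by linarith
  next
    case False
    then have "exp t \<le> exp (t\<^sup>2)" by (simp add: power2_eq_square)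
    moreover have "exp (- t) \<le> 1" "1 \<le> exp (t\<^sup>2)" using t by simp_all
    ultimately show ?thesis by linarith
  qed
  from key[of t] key[of "- t"] show ?thesis by (cases "0 \<le> t") (simp_all add: add.commute)
qed

lemma exp_sub_sq_add_exp_le_2: "exp (a - a\<^sup>2) + exp (- a - a\<^sup>2) \<le> (2::real)"
proof -
  have "exp (a - a\<^sup>2) + exp (- a - a\<^sup>2) = (exp a + exp (- a)) * exp (- a\<^sup>2)"
    by (simp add: distrib_right flip: exp_add)
  also have "\<dots> \<le> 2 * exp (a\<^sup>2) * exp (- a\<^sup>2)"
    using exp_add_exp_minus_le[of a] by (intro mult_right_mono) auto
  also have "\<dots> = 2" by (simp add: mult.assoc flip: exp_add)
  finally show ?thesis .
qed

lemma mult_ln_div_le: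
  fixes x a :: real
  assumes "0 \<le> x" "0 < a"
  shows "x * ln (a / x) \<le> a - x"
proof (cases "x = 0")
  case False
  then have "0 < x" using assms(1) by simp
  have "ln (a / x) \<le> a / x - 1" using \<open>0 < x\<close> assms(2) by (intro ln_le_minus_one) simp
  then have "x * ln (a / x) \<le> x * (a / x - 1)" using \<open>0 < x\<close> by (intro mult_left_mono) auto
  also have "\<dots> = a - x" using \<open>0 < x\<close> by (simp add: field_simps)
  finally show ?thesis .
qed (use assms in simp)

lemma weighted_log_sum_exp:
  fixes x y u v :: real
  assumes "0 \<le> x" "0 \<le> y" "0 < x + y"
  shows "x * (u - ln x) + y * (v - ln y) \<le> (x + y) * ln ((exp u + exp v) / (x + y))"
proof -
  define c where "c = ln ((exp u + exp v) / (x + y))"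
  have shift: "z * (t - ln z) = z * ln (exp (t - c) / z) + z * c" if "0 \<le> z" for z t
    using that by (cases "z = 0") (auto simp: ln_div algebra_simps)
  have "exp c = (exp u + exp v) / (x + y)"
    unfolding c_def using assms(3) by (intro exp_ln) (simp add: add_pos_pos)
  then have "exp (u - c) + exp (v - c) = x + y"
    using assms(3) by (simp add: exp_diff field_simps add_pos_pos)
  then show ?thesis
    using mult_ln_div_le[OF assms(1), of "exp (u - c)"] mult_ln_div_le[OF assms(2), of "exp (v - c)"]
      shift[OF assms(1), of u] shift[OF assms(2), of v]
    by (simp add: c_def algebra_simps)
qed

lemma entropy_step:
  fixes a x y :: real
  assumes "0 \<le> x" "0 \<le> y"
  shows "x * (a - a\<^sup>2 - ln x) + y * (- a - a\<^sup>2 - ln y) \<le> - (x + y) * ln ((x + y) / 2)"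
proof (cases "x + y = 0")
  case False
  then have P: "0 < x + y" using assms by simp
  have "x * (a - a\<^sup>2 - ln x) + y * (- a - a\<^sup>2 - ln y)
      \<le> (x + y) * ln ((exp (a - a\<^sup>2) + exp (- a - a\<^sup>2)) / (x + y))"
    by (rule weighted_log_sum_exp[OF assms P])
  also have "\<dots> \<le> (x + y) * ln (2 / (x + y))"
  proof (intro mult_left_mono)
    have "(exp (a - a\<^sup>2) + exp (- a - a\<^sup>2)) / (x + y) \<le> 2 / (x + y)"
      using exp_sub_sq_add_exp_le_2[of a] P by (intro divide_right_mono) auto
    then show "ln ((exp (a - a\<^sup>2) + exp (- a - a\<^sup>2)) / (x + y)) \<le> ln (2 / (x + y))"
      using P by (subst ln_le_cancel_iff) (auto intro!: divide_pos_pos add_pos_pos)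
  qed (use P in simp)
  also have "\<dots> = - (x + y) * ln ((x + y) / 2)"
    using P by (simp add: ln_div algebra_simps)
  finally show ?thesis .
qed (use assms in \<open>simp add: add_nonneg_eq_0_iff\<close>)

lemma edge_sum_entropy_bound:
  assumes "\<And>h b. 0 \<le> w h b" "\<And>h b. w h b \<le> 1"
  shows "edge_sum T h w (\<lambda>h i b. a h i * real_of_int b - (a h i)\<^sup>2)
    \<le> - walk_exp T h w * ln (walk_exp T h w)"
proof (induction T arbitrary: h)
  case (Leaf b)
  have "0 \<le> w h b" "w h b \<le> 1" using assms by auto
  then have "w h b * ln (w h b) \<le> 0"
    by (cases "w h b = 0") (auto intro: mult_nonneg_nonpos)
  then show ?case by simp
next
  case (Node i L R)
  let ?x = "walk_exp R ((i,1)#h) w" and ?y = "walk_exp L ((i,-1)#h) w"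
  have "edge_sum (Node i L R) h w (\<lambda>h i b. a h i * real_of_int b - (a h i)\<^sup>2)
     \<le> (?y * (a h i * (-1) - (a h i)\<^sup>2) - ?y * ln ?y + ?x * (a h i * 1 - (a h i)\<^sup>2) - ?x * ln ?x) / 2"
    using Node.IH[of "(i,-1)#h"] Node.IH[of "(i,1)#h"] by simp
  also have "\<dots> = (?x * (a h i - (a h i)\<^sup>2 - ln ?x) + ?y * (- a h i - (a h i)\<^sup>2 - ln ?y)) / 2"
    by (simp add: algebra_simps)
  also have "\<dots> \<le> - (?x + ?y) * ln ((?x + ?y) / 2) / 2"
    using entropy_step[of ?x ?y "a h i"] assms(1) by (simp add: divide_right_mono walk_exp_nonneg)
  also have "\<dots> = - walk_exp (Node i L R) h w * ln (walk_exp (Node i L R) h w)"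
    by (simp add: algebra_simps)
  finally show ?case .
qed

lemma le_2_sqrt_of_le_for_all:
  fixes x A B :: real
  assumes "0 < A" "0 \<le> B" "\<And>lam. 0 < lam \<Longrightarrow> x \<le> A / lam + lam * B"
  shows "x \<le> 2 * sqrt (A * B)"
proof (cases "B = 0")
  case True
  show ?thesis
  proof (rule ccontr)
    assume "\<not> ?thesis"
    then have xp: "0 < x" using True by simp
    have "x \<le> A / (2 * A / x)" using assms(3)[of "2 * A / x"] xp assms(1) True by simp
    also have "\<dots> = x / 2" using assms(1) xp by simp
    finally show False using xp by simp
  qed
next
  case False
  then have Bp: "0 < B" using assms(2) by simp
  let ?l = "sqrt (A / B)"
  have lp: "0 < ?l" using assms(1) Bp by simp
  have "x \<le> A / ?l + ?l * B" by (rule assms(3)[OF lp])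
  also have "A / ?l = sqrt (A * B)"
    using assms(1) Bp by (simp add: real_sqrt_divide field_simps real_sqrt_mult)
  also have "?l * B = sqrt (A * B)"
    using assms(1) Bp by (simp add: real_sqrt_divide field_simps real_sqrt_mult)
  finally show ?thesis by simp
qed

lemma edge_sum_bounded_increments_le:
  assumes w: "\<And>h b. 0 \<le> w h b" "\<And>h b. w h b \<le> 1"
    and a: "\<And>h i. \<bar>a h i\<bar> \<le> m (length h)" and D: "dt_depth T \<le> D"
    and P: "P = walk_exp T [] w" "0 < P" and L: "0 < L" "- ln P \<le> L"
  shows "edge_sum T [] w (\<lambda>h i b. real_of_int b * a h i) \<le> 2 * P * sqrt (L * (\<Sum>t<D. (m t)\<^sup>2))"
proof -
  define V where "V = (\<Sum>t<D. (m t)\<^sup>2)"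
  let ?X = "edge_sum T [] w (\<lambda>h i b. real_of_int b * a h i)"
  \<comment> \<open>the entropy bound for the increments \<open>\<theta> * a\<close> gives \<open>\<theta> X \<le> P L + \<theta>\<^sup>2 P V\<close> for all \<open>\<theta> > 0\<close>\<close>
  have "?X \<le> 2 * sqrt ((P * L) * (P * V))"
  proof (rule le_2_sqrt_of_le_for_all)
    show "0 < P * L" using P(2) L(1) by simp
    show "0 \<le> P * V" unfolding V_def using P(2) by (intro mult_nonneg_nonneg sum_nonneg) auto
    fix \<theta> :: real assume "0 < \<theta>"
    have "edge_sum T [] w (\<lambda>h i b. \<theta> * a h i * real_of_int b - (\<theta> * a h i)\<^sup>2) \<le> - P * ln P"
      unfolding P(1) by (rule edge_sum_entropy_bound[OF w])
    moreover have "edge_sum T [] w (\<lambda>h i b. \<theta> * a h i * real_of_int b - (\<theta> * a h i)\<^sup>2)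
        = \<theta> * ?X - edge_sum T [] w (\<lambda>h i b. (\<theta> * a h i)\<^sup>2)"
      using edge_sum_add[of T "[]" w "\<lambda>h i b. \<theta> * (real_of_int b * a h i)" "\<lambda>h i b. - (\<theta> * a h i)\<^sup>2"]
        edge_sum_cmult[of T "[]" w \<theta>] edge_sum_cmult[of T "[]" w "-1"]
      by (simp add: mult_ac)
    moreover have "edge_sum T [] w (\<lambda>h i b. (\<theta> * a h i)\<^sup>2) \<le> P * (\<theta>\<^sup>2 * V)"
    proof -
      have sq: "(\<theta> * a h i)\<^sup>2 \<le> \<theta>\<^sup>2 * (m (length h))\<^sup>2" for h i
        using power_mono[OF a[of h i] abs_ge_zero, of 2] by (simp add: power_mult_distrib mult_left_mono)
      have "edge_sum T [] w (\<lambda>h i b. (\<theta> * a h i)\<^sup>2)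
          \<le> walk_exp T [] w * (\<Sum>t\<in>{length ([]::path)..<length ([]::path) + dt_depth T}. \<theta>\<^sup>2 * (m t)\<^sup>2)"
        by (rule edge_sum_le_depth[OF w(1)]) (simp_all add: sq)
      also have "\<dots> = P * (\<Sum>t<dt_depth T. \<theta>\<^sup>2 * (m t)\<^sup>2)"
        using P(1) by (simp add: atLeast0LessThan)
      also have "\<dots> \<le> P * (\<theta>\<^sup>2 * V)"
        using D P(2) by (auto intro!: mult_left_mono sum_mono2 simp: V_def sum_distrib_left)
      finally show ?thesis .
    qed
    moreover have "- P * ln P \<le> P * L" using mult_left_mono[OF L(2), of P] P(2) by simp
    ultimately have "\<theta> * ?X \<le> P * L + P * (\<theta>\<^sup>2 * V)" by linarith
    then show "?X \<le> P * L / \<theta> + \<theta> * (P * V)"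
      using \<open>0 < \<theta>\<close> by (simp add: field_simps power2_eq_square)
  qed
  also have "sqrt ((P * L) * (P * V)) = P * sqrt (L * V)"
    using P(2) by (simp add: real_sqrt_mult mult_ac)
  finally show ?thesis by (simp add: V_def)
qed

section \<open>Levels of a tree\<close>

fun level_sum :: "dtree \<Rightarrow> path \<Rightarrow> nat \<Rightarrow> (path \<Rightarrow> bool \<Rightarrow> real) \<Rightarrow> (path \<Rightarrow> nat \<Rightarrow> real) \<Rightarrow> real" where
  "level_sum (Leaf b) h t w c = 0"
| "level_sum (Node i L R) h 0 w c = walk_exp (Node i L R) h w * c h i"
| "level_sum (Node i L R) h (Suc t) w c = (level_sum L ((i,-1)#h) t w c + level_sum R ((i,1)#h) t w c) / 2"

lemma level_sum_beyond_depth: "dt_depth T \<le> t \<Longrightarrow> level_sum T h t w c = 0"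
proof (induction T arbitrary: h t)
  case (Leaf b) then show ?case by simp
next
  case (Node i L R)
  then obtain t' where "t = Suc t'" by (cases t) auto
  then show ?case using Node by simp
qed

lemma edge_sum_eq_sum_level_sum: "edge_sum T h w (\<lambda>h i b. c h i) = (\<Sum>t<dt_depth T. level_sum T h t w c)"
proof (induction T arbitrary: h)
  case (Leaf b) then show ?case by simp
next
  case (Node i L R)
  let ?m = "max (dt_depth L) (dt_depth R)"
  have sL: "(\<Sum>t<?m. level_sum L ((i,-1)#h) t w c) = (\<Sum>t<dt_depth L. level_sum L ((i,-1)#h) t w c)"
    by (rule sum.mono_neutral_right) (auto simp: level_sum_beyond_depth)
  have sR: "(\<Sum>t<?m. level_sum R ((i,1)#h) t w c) = (\<Sum>t<dt_depth R. level_sum R ((i,1)#h) t w c)"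
    by (rule sum.mono_neutral_right) (auto simp: level_sum_beyond_depth)
  have d: "dt_depth (Node i L R) = Suc ?m" by simp
  have "(\<Sum>t<dt_depth (Node i L R). level_sum (Node i L R) h t w c)
      = level_sum (Node i L R) h 0 w c + (\<Sum>t<?m. level_sum (Node i L R) h (Suc t) w c)"
    unfolding d by (rule sum.lessThan_Suc_shift)
  also have "\<dots> = walk_exp (Node i L R) h w * c h i + ((\<Sum>t<?m. level_sum L ((i,-1)#h) t w c) + (\<Sum>t<?m. level_sum R ((i,1)#h) t w c)) / 2"
    by (simp add: sum.distrib flip: sum_divide_distrib)
  finally show ?case using Node.IH[of "(i,-1)#h"] Node.IH[of "(i,1)#h"] sL sR
    by (simp add: field_simps)
qed

lemma level_sum_cong:
  assumes "\<And>ext i. length ext = t \<Longrightarrow> i \<in> dt_vars T \<Longrightarrow> c (ext @ h) i = c' (ext @ h) i"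
  shows "level_sum T h t w c = level_sum T h t w c'"
  using assms
proof (induction T arbitrary: h t)
  case (Leaf b) then show ?case by simp
next
  case (Node i L R)
  show ?case
  proof (cases t)
    case 0
    then show ?thesis using Node.prems[of "[]" i] by simp
  next
    case (Suc t')
    have "level_sum L ((i,-1)#h) t' w c = level_sum L ((i,-1)#h) t' w c'"
    proof (rule Node.IH(1))
      fix ext :: path and j assume "length ext = t'" "j \<in> dt_vars L"
      then show "c (ext @ (i,-1)#h) j = c' (ext @ (i,-1)#h) j"
        using Node.prems[of "ext @ [(i,-1)]" j] Suc by simp
    qed
    moreover have "level_sum R ((i,1)#h) t' w c = level_sum R ((i,1)#h) t' w c'"
    proof (rule Node.IH(2))
      fix ext :: path and j assume "length ext = t'" "j \<in> dt_vars R"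
      then show "c (ext @ (i,1)#h) j = c' (ext @ (i,1)#h) j"
        using Node.prems[of "ext @ [(i,1)]" j] Suc by simp
    qed
    ultimately show ?thesis using Suc by simp
  qed
qed

lemma level_sum_sum: "finite J \<Longrightarrow> level_sum T h t w (\<lambda>h i. \<Sum>j\<in>J. c j h i) = (\<Sum>j\<in>J. level_sum T h t w (c j))"
proof (induction T arbitrary: h t)
  case (Leaf b) then show ?case by simp
next
  case (Node i L R)
  then show ?case
    by (cases t) (simp_all add: sum_distrib_left sum.distrib flip: sum_divide_distrib)
qed

lemma level_sum_zero: "level_sum T h t w (\<lambda>h i. 0) = 0"
proof (induction T arbitrary: h t)
  case (Leaf b) then show ?case by simp
next
  case (Node i L R) then show ?case by (cases t) auto
qed

fun dt_trunc :: "dtree \<Rightarrow> nat \<Rightarrow> dtree" where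
  "dt_trunc (Leaf b) t = Leaf b"
| "dt_trunc (Node i L R) 0 = Leaf False"
| "dt_trunc (Node i L R) (Suc t) = Node i (dt_trunc L t) (dt_trunc R t)"

fun dt_follow :: "dtree \<Rightarrow> path \<Rightarrow> dtree" where
  "dt_follow T [] = T"
| "dt_follow (Leaf b) (p#r) = Leaf b"
| "dt_follow (Node i L R) (p#r) = dt_follow (if snd p = -1 then L else R) r"

definition level_weight :: "dtree \<Rightarrow> path \<Rightarrow> (path \<Rightarrow> bool \<Rightarrow> real) \<Rightarrow> (path \<Rightarrow> nat \<Rightarrow> real) \<Rightarrow> path \<Rightarrow> real" where
  "level_weight T h w c h' = (case dt_follow T (rev (take (length h' - length h) h')) of
      Leaf _ \<Rightarrow> 0 | Node i L R \<Rightarrow> walk_exp (Node i L R) h' w * c h' i)"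

lemma level_sum_eq_walk_exp_trunc: "level_sum T h t w c = walk_exp (dt_trunc T t) h (\<lambda>h' _. level_weight T h w c h')"
proof (induction T arbitrary: h t)
  case (Leaf b) then show ?case by (simp add: level_weight_def)
next
  case (Node i L R)
  show ?case
  proof (cases t)
    case 0 then show ?thesis by (simp add: level_weight_def)
  next
    case (Suc t')
    have "walk_exp (dt_trunc L t') ((i,-1)#h) (\<lambda>h' _. level_weight L ((i,-1)#h) w c h')
        = walk_exp (dt_trunc L t') ((i,-1)#h) (\<lambda>h' _. level_weight (Node i L R) h w c h')"
      by (rule walk_exp_cong) (simp add: level_weight_def)
    moreover have "walk_exp (dt_trunc R t') ((i,1)#h) (\<lambda>h' _. level_weight R ((i,1)#h) w c h')
        = walk_exp (dt_trunc R t') ((i,1)#h) (\<lambda>h' _. level_weight (Node i L R) h w c h')"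
      by (rule walk_exp_cong) (simp add: level_weight_def)
    ultimately show ?thesis using Suc Node.IH by simp
  qed
qed

lemma level_sum_mult_eq_walk_exp_trunc:
  "level_sum T h t w (\<lambda>h' i. c h' i * g h')
    = walk_exp (dt_trunc T t) h (\<lambda>h' _. level_weight T h w c h' * g h')"
proof -
  have "level_weight T h w (\<lambda>h' i. c h' i * g h') h' = level_weight T h w c h' * g h'" for h'
    by (simp add: level_weight_def split: dtree.split)
  then show ?thesis by (simp add: level_sum_eq_walk_exp_trunc)
qed

lemma dt_trunc_vars: "dt_vars (dt_trunc T t) \<subseteq> dt_vars T"
  by (induction T t rule: dt_trunc.induct) auto

lemma nonrepeating_dt_trunc: "nonrepeating T \<Longrightarrow> nonrepeating (dt_trunc T t)"
  by (induction T t rule: dt_trunc.induct) (use dt_trunc_vars in fastforce)+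

lemma dt_trunc_depth: "dt_depth (dt_trunc T t) \<le> t"
  by (induction T t rule: dt_trunc.induct) auto

lemma level_weight_range:
  assumes "\<And>h b. 0 \<le> w h b" "\<And>h b. w h b \<le> 1" "\<And>h i. 0 \<le> c h i" "\<And>h i. c h i \<le> 1"
  shows "0 \<le> level_weight T h w c h'" "level_weight T h w c h' \<le> 1"
proof -
  have "0 \<le> walk_exp T' h' w * c h' i \<and> walk_exp T' h' w * c h' i \<le> 1" for T' i
    using walk_exp_nonneg[of w T' h'] walk_exp_le_1[of w T' h'] assms
    by (simp add: mult_le_one)
  then show "0 \<le> level_weight T h w c h'" "level_weight T h w c h' \<le> 1"
    by (auto simp: level_weight_def simp del: walk_exp.simps split: dtree.split)
qed

section \<open>The bounding function\<close>

text \<open>The induction hypothesis is used at mass \<open>P / scale n\<close>; the factor 9 leaves \<open>2/3\<close> of the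
  bound to the small increments and \<open>1/3\<close> to the large ones.\<close>

definition scale :: "nat \<Rightarrow> real" where "scale n = 2 * real n ^ 3"

definition log_factor :: "nat \<Rightarrow> nat \<Rightarrow> real \<Rightarrow> real" where
  "log_factor n i p = ln (4 * scale n ^ i / p)"

definition deg_bound :: "nat \<Rightarrow> nat \<Rightarrow> nat \<Rightarrow> real \<Rightarrow> real" where
  "deg_bound n k D p = sqrt (9 ^ k * real (D choose k) * (\<Prod>i<k. log_factor n i p))"

lemma one_le_ln_4: "1 \<le> ln (4::real)"
proof -
  have "exp 1 \<le> (4::real)" using exp_le by simp
  then show ?thesis by (subst ln_ge_iff) auto
qed

lemma scale_ge_2: "1 \<le> n \<Longrightarrow> 2 \<le> scale n"
  by (simp add: scale_def)

lemma log_factor_ge_1: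
  assumes "1 \<le> n" "0 < p" "p \<le> 1"
  shows "1 \<le> log_factor n i p"
proof -
  have "1 \<le> scale n ^ i" using scale_ge_2[OF assms(1)] by (simp add: one_le_power)
  then have "4 \<le> 4 * scale n ^ i / p" using assms(2,3)
    by (simp add: le_divide_eq)
  then have "ln 4 \<le> log_factor n i p" unfolding log_factor_def by (subst ln_le_cancel_iff) auto
  then show ?thesis using one_le_ln_4 by simp
qed

lemma prod_log_factor_nonneg: "1 \<le> n \<Longrightarrow> 0 < p \<Longrightarrow> p \<le> 1 \<Longrightarrow> 0 \<le> (\<Prod>i<k. log_factor n i p)"
  using log_factor_ge_1 by (intro prod_nonneg) (meson dual_order.trans zero_le_one)

lemma deg_bound_sq:
  assumes "1 \<le> n" "0 < p" "p \<le> 1"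
  shows "(deg_bound n k D p)\<^sup>2 = 9 ^ k * real (D choose k) * (\<Prod>i<k. log_factor n i p)"
  unfolding deg_bound_def using prod_log_factor_nonneg[OF assms, of k] by (intro real_sqrt_pow2) simp

lemma deg_bound_nonneg:
  assumes "1 \<le> n" "0 < p" "p \<le> 1"
  shows "0 \<le> deg_bound n k D p"
  unfolding deg_bound_def using prod_log_factor_nonneg[OF assms, of k] by simp

lemma log_factor_scale:
  assumes "1 \<le> n" "0 < P"
  shows "log_factor n i (P / scale n) = log_factor n (Suc i) P"
proof -
  have "scale n > 0" using scale_ge_2[OF assms(1)] by simp
  then have "4 * scale n ^ i / (P / scale n) = 4 * scale n ^ Suc i / P" by (simp add: field_simps)
  then show ?thesis by (simp add: log_factor_def mult_ac)
qed

lemma sum_lessThan_choose: "(\<Sum>t<D. t choose k) = D choose Suc k"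
proof (cases D)
  case 0 then show ?thesis by simp
next
  case (Suc m)
  then have "{..<D} = {..m}" by auto
  then show ?thesis using sum_choose_upper[where n=m and m=k] Suc by simp
qed

lemma log_factor_sum_deg_bound_sq:
  assumes "1 \<le> n" "0 < P" "P \<le> 1"
  shows "log_factor n 0 P * (\<Sum>t<D. (deg_bound n k t (P / scale n))\<^sup>2) = (deg_bound n (Suc k) D P)\<^sup>2 / 9"
proof -
  have N: "2 \<le> scale n" using scale_ge_2[OF assms(1)] .
  have Q: "0 < P / scale n" "P / scale n \<le> 1" using N assms by (auto simp: divide_le_eq)
  have pr: "(\<Prod>i<k. log_factor n i (P / scale n)) = (\<Prod>i<k. log_factor n (Suc i) P)"
    using log_factor_scale[OF assms(1,2)] by simp
  have "(\<Sum>t<D. (deg_bound n k t (P / scale n))\<^sup>2) = (\<Sum>t<D. 9 ^ k * real (t choose k) * (\<Prod>i<k. log_factor n (Suc i) P))"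
    using deg_bound_sq[OF assms(1) Q] pr by simp
  also have "\<dots> = 9 ^ k * (\<Prod>i<k. log_factor n (Suc i) P) * real (\<Sum>t<D. t choose k)"
    by (simp add: sum_distrib_left sum_distrib_right mult_ac)
  also have "\<dots> = 9 ^ k * (\<Prod>i<k. log_factor n (Suc i) P) * real (D choose Suc k)"
    by (simp add: sum_lessThan_choose)
  finally have s: "(\<Sum>t<D. (deg_bound n k t (P / scale n))\<^sup>2) = 9 ^ k * (\<Prod>i<k. log_factor n (Suc i) P) * real (D choose Suc k)" .
  have "(deg_bound n (Suc k) D P)\<^sup>2 = 9 ^ Suc k * real (D choose Suc k) * (log_factor n 0 P * (\<Prod>i<k. log_factor n (Suc i) P))"
    using deg_bound_sq[OF assms, of "Suc k" D] unfolding prod.lessThan_Suc_shift .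
  then show ?thesis using s by (simp add: field_simps)
qed

lemma deg_bound_sq_le:
  assumes "1 \<le> n" "0 < P" "P \<le> 1" "t < D"
  shows "(deg_bound n k t (P / scale n))\<^sup>2 \<le> (deg_bound n (Suc k) D P)\<^sup>2 / 9"
proof -
  let ?S = "\<Sum>s<D. (deg_bound n k s (P / scale n))\<^sup>2"
  have "(deg_bound n k t (P / scale n))\<^sup>2 \<le> ?S"
    using assms(4) by (intro member_le_sum) auto
  also have "\<dots> \<le> log_factor n 0 P * ?S"
    using mult_right_mono[OF log_factor_ge_1[OF assms(1-3), of 0], of ?S] by (simp add: sum_nonneg)
  also have "\<dots> = (deg_bound n (Suc k) D P)\<^sup>2 / 9"
    by (rule log_factor_sum_deg_bound_sq[OF assms(1-3)])
  finally show ?thesis .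
qed

lemma deg_bound_strict_antimono:
  assumes "1 \<le> n" "1 \<le> k" "0 < Q" "Q < q" "q \<le> 1" "0 < D choose k"
  shows "deg_bound n k D q < deg_bound n k D Q"
proof -
  have Q1: "Q \<le> 1" using assms by simp
  have lt: "log_factor n i q < log_factor n i Q" for i
  proof -
    have "scale n ^ i > 0" using scale_ge_2[OF assms(1)] by simp
    then have "4 * scale n ^ i / q < 4 * scale n ^ i / Q" using assms(3,4) by (intro divide_strict_left_mono) auto
    then show ?thesis unfolding log_factor_def using assms \<open>scale n ^ i > 0\<close> by (subst ln_less_cancel_iff) auto
  qed
  have "(\<Prod>i<k. log_factor n i q) < (\<Prod>i<k. log_factor n i Q)"
  proof (rule prod_mono_strict[of 0])
    show "0 \<in> {..<k}" using assms(2) by simp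
    show "log_factor n 0 q < log_factor n 0 Q" by (rule lt)
    show "finite {..<k}" by simp
    fix i assume "i \<in> {..<k}"
    show "0 \<le> log_factor n i q \<and> log_factor n i q \<le> log_factor n i Q"
      using log_factor_ge_1[OF assms(1), of q i] lt[of i] assms by auto
    show "0 < log_factor n i Q" using log_factor_ge_1[OF assms(1) assms(3) Q1, of i] by simp
  qed
  then have "9 ^ k * real (D choose k) * (\<Prod>i<k. log_factor n i q) < 9 ^ k * real (D choose k) * (\<Prod>i<k. log_factor n i Q)"
    using assms(6) by simp
  then show ?thesis unfolding deg_bound_def by (subst real_sqrt_less_iff) 
qed

lemma sum_inverse_le_1_plus_ln: "1 \<le> k \<Longrightarrow> (\<Sum>i<k. 1 / (real i + 1)) \<le> 1 + ln (real k)"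
proof (induction k rule: dec_induct)
  case base then show ?case by simp
next
  case (step m)
  have "ln (real m / (real m + 1)) \<le> real m / (real m + 1) - 1"
    using step.hyps by (intro ln_le_minus_one) auto
  also have "\<dots> = - 1 / (real m + 1)" by (simp add: field_simps)
  finally have "1 / (real m + 1) \<le> ln (real m + 1) - ln (real m)"
    using step.hyps by (simp add: ln_div)
  then show ?case using step.IH by (simp add: add.commute)
qed

lemma sum_inverse_le_2_ln_scale:
  assumes "k < n"
  shows "(\<Sum>i<k. 1 / (real i + 1)) \<le> 2 * ln (scale n)"
proof (cases "k = 0")
  case True
  then show ?thesis using scale_ge_2[of n] assms by simp
next
  case False
  moreover have "ln (real k) \<le> ln (real n)" using False assms by simp
  ultimately have "(\<Sum>i<k. 1 / (real i + 1)) \<le> 1 + ln (real n)"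
    using sum_inverse_le_1_plus_ln[of k] by simp
  also have "\<dots> \<le> 2 * ln 2 + 6 * ln (real n)"
  proof -
    have "0 \<le> ln (real n)" using assms by simp
    moreover have "1 \<le> 2 * ln (2::real)" using one_le_ln_4 ln_realpow[of 2 2] by simp
    ultimately show ?thesis by linarith
  qed
  also have "\<dots> = 2 * ln (scale n)"
  proof -
    have "0 < real n" using assms by simp
    then show ?thesis by (simp add: scale_def ln_mult ln_realpow)
  qed
  finally show ?thesis .
qed

lemma log_factor_ge_Suc_mult_ln_scale:
  assumes "1 \<le> n" "0 < Q" "Q \<le> 1 / scale n"
  shows "real (Suc i) * ln (scale n) \<le> log_factor n i Q"
proof -
  have N: "2 \<le> scale n" by (rule scale_ge_2[OF assms(1)])
  then have "scale n ^ Suc i \<le> 4 * scale n ^ i / Q"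
    using assms(2,3) by (simp add: le_divide_eq mult.commute)
  then have "ln (scale n ^ Suc i) \<le> log_factor n i Q"
    unfolding log_factor_def using N assms(2) by (subst ln_le_cancel_iff) auto
  moreover have "ln (scale n ^ Suc i) = real (Suc i) * ln (scale n)" using N by (intro ln_realpow)
  ultimately show ?thesis by linarith
qed

lemma log_factor_eq_add_ln:
  assumes "1 \<le> n" "0 < q" "0 < Q"
  shows "log_factor n i q = log_factor n i Q + ln (Q / q)"
proof -
  have "0 < scale n ^ i" using scale_ge_2[OF assms(1)] by simp
  then have e: "4 * scale n ^ i / q = (4 * scale n ^ i / Q) * (Q / q)" using assms by (simp add: field_simps)
  have l: "ln ((4 * scale n ^ i / Q) * (Q / q)) = ln (4 * scale n ^ i / Q) + ln (Q / q)"
    using \<open>0 < scale n ^ i\<close> assms by (intro ln_mult_pos) auto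
  show ?thesis unfolding log_factor_def e l ..
qed

lemma prod_log_factor_le:
  assumes n: "1 \<le> n" "k < n" and q: "0 < q" "q \<le> Q" and Q: "Q \<le> 1 / scale n"
  shows "(\<Prod>i<k. log_factor n i q) \<le> (\<Prod>i<k. log_factor n i Q) * (Q / q)\<^sup>2"
proof -
  define x where "x = ln (Q / q)"
  \<comment> \<open>each factor grows by \<open>x\<close>, i.e. by at most a factor \<open>exp (x / log_factor n i Q)\<close>, and
     \<open>log_factor n i Q \<ge> (i + 1) ln (scale n)\<close> makes these exponents sum to at most \<open>2 x\<close>\<close>
  have "0 < Q" "0 \<le> x" using q by (auto simp: x_def)
  have lnN: "0 < ln (scale n)" using scale_ge_2[OF n(1)] by simp
  have low: "real (Suc i) * ln (scale n) \<le> log_factor n i Q" for i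
    by (rule log_factor_ge_Suc_mult_ln_scale[OF n(1) \<open>0 < Q\<close> Q])
  then have pos: "0 < log_factor n i Q" for i
    using lnN by (meson less_le_trans mult_pos_pos of_nat_0_less_iff zero_less_Suc)
  have q_eq: "log_factor n i q = log_factor n i Q + x" for i
    using log_factor_eq_add_ln[OF n(1) q(1) \<open>0 < Q\<close>] by (simp add: x_def)
  have "log_factor n i q \<le> log_factor n i Q * exp (x / log_factor n i Q)" for i
  proof -
    have "log_factor n i q = log_factor n i Q * (1 + x / log_factor n i Q)"
      using pos[of i] by (simp add: q_eq field_simps)
    also have "\<dots> \<le> log_factor n i Q * exp (x / log_factor n i Q)"
      using pos[of i] by (intro mult_left_mono) auto
    finally show ?thesis .
  qed
  moreover have "0 \<le> log_factor n i q" for i using pos[of i] \<open>0 \<le> x\<close> by (simp add: q_eq)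
  ultimately have "(\<Prod>i<k. log_factor n i q) \<le> (\<Prod>i<k. log_factor n i Q * exp (x / log_factor n i Q))"
    by (intro prod_mono) auto
  also have "\<dots> = (\<Prod>i<k. log_factor n i Q) * exp (\<Sum>i<k. x / log_factor n i Q)"
    by (simp add: prod.distrib exp_sum)
  also have "\<dots> \<le> (\<Prod>i<k. log_factor n i Q) * exp (2 * x)"
  proof (intro mult_left_mono prod_nonneg)
    have "(\<Sum>i<k. x / log_factor n i Q) \<le> (\<Sum>i<k. x / ln (scale n) * (1 / (real i + 1)))"
    proof (rule sum_mono)
      fix i
      have "x / log_factor n i Q \<le> x / (real (Suc i) * ln (scale n))"
        using low[of i] pos[of i] \<open>0 \<le> x\<close> lnN by (intro divide_left_mono mult_pos_pos) auto
      then show "x / log_factor n i Q \<le> x / ln (scale n) * (1 / (real i + 1))" by (simp add: field_simps)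
    qed
    also have "\<dots> = x / ln (scale n) * (\<Sum>i<k. 1 / (real i + 1))"
      by (rule sum_distrib_left[symmetric])
    also have "\<dots> \<le> x / ln (scale n) * (2 * ln (scale n))"
      using sum_inverse_le_2_ln_scale[OF n(2)] \<open>0 \<le> x\<close> lnN by (intro mult_left_mono) auto
    finally show "exp (\<Sum>i<k. x / log_factor n i Q) \<le> exp (2 * x)" using lnN by simp
  qed (use pos in \<open>auto intro: less_imp_le\<close>)
  also have "exp (2 * x) = (Q / q)\<^sup>2"
    using q by (simp add: x_def exp_double)
  finally show ?thesis .
qed

lemma mul_deg_bound_mono:
  assumes "1 \<le> n" "k < n" "0 < q" "q \<le> Q" "Q \<le> 1 / scale n"
  shows "q * deg_bound n k t q \<le> Q * deg_bound n k t Q"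
proof -
  have "q\<^sup>2 * (\<Prod>i<k. log_factor n i q) \<le> q\<^sup>2 * ((\<Prod>i<k. log_factor n i Q) * (Q / q)\<^sup>2)"
    using prod_log_factor_le[OF assms] by (intro mult_left_mono) auto
  also have "\<dots> = Q\<^sup>2 * (\<Prod>i<k. log_factor n i Q)"
    using assms(3) by (simp add: power_divide field_simps)
  finally have "q\<^sup>2 * (\<Prod>i<k. log_factor n i q) * (9 ^ k * real (t choose k))
      \<le> Q\<^sup>2 * (\<Prod>i<k. log_factor n i Q) * (9 ^ k * real (t choose k))"
    by (rule mult_right_mono) simp
  then have "sqrt (q\<^sup>2 * (\<Prod>i<k. log_factor n i q) * (9 ^ k * real (t choose k)))
      \<le> sqrt (Q\<^sup>2 * (\<Prod>i<k. log_factor n i Q) * (9 ^ k * real (t choose k)))"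
    by (rule real_sqrt_le_mono)
  then show ?thesis using assms(3,4) by (simp add: deg_bound_def real_sqrt_mult mult_ac)
qed

text \<open>Since \<open>deg_bound\<close> decreases and \<open>q * deg_bound n k t q\<close> increases in \<open>q\<close>, a mass \<open>q\<close> with
  \<open>M * q \<le> q * deg_bound n k t q\<close> is at most \<open>Q\<close>.\<close>

lemma deg_bound_threshold:
  assumes n: "1 \<le> n" and k: "1 \<le> k" "k < n" and q: "0 \<le> q" "q \<le> 1"
    and Q: "0 < Q" "Q \<le> 1 / scale n" and M: "M = deg_bound n k t Q"
    and lo: "M * q \<le> x" and hi: "x \<le> q * deg_bound n k t q"
  shows "x \<le> Q * M"
proof -
  have N: "2 \<le> scale n" using scale_ge_2[OF n] .
  have Q1: "Q \<le> 1" using Q N by (smt (verit) divide_le_eq_1)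
  have M0: "0 \<le> M" using deg_bound_nonneg[OF n Q(1) Q1] M by simp
  have QM: "0 \<le> Q * M" using M0 Q by simp
  show ?thesis
  proof (cases "q = 0")
    case True
    then show ?thesis using hi QM by simp
  next
    case False
    then have qp: "0 < q" using q by simp
    show ?thesis
    proof (cases "t choose k = 0")
      case True
      then have "deg_bound n k t q = 0" by (simp add: deg_bound_def)
      then show ?thesis using hi QM by simp
    next
      case False
      then have c: "0 < t choose k" by simp
      have "M * q \<le> deg_bound n k t q * q" using lo hi by (simp add: mult.commute)
      then have Mle: "M \<le> deg_bound n k t q" using qp by simp
      have "q \<le> Q"
      proof (rule ccontr)
        assume "\<not> q \<le> Q"
        then have "Q < q" by simp
        then have "deg_bound n k t q < deg_bound n k t Q" by (intro deg_bound_strict_antimono[OF n k(1) Q(1) _ q(2) c])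
        then show False using Mle M by simp
      qed
      then have "q * deg_bound n k t q \<le> Q * deg_bound n k t Q" by (intro mul_deg_bound_mono[OF n k(2) qp _ Q(2)])
      then show ?thesis using hi M by simp
    qed
  qed
qed

section \<open>Induction on the degree\<close>

definition walk_deg_part_bound :: "nat \<Rightarrow> nat \<Rightarrow> bool" where
  "walk_deg_part_bound n k \<longleftrightarrow>
    (\<forall>T D s w. nonrepeating T \<longrightarrow> dt_vars T \<subseteq> {..<n} \<longrightarrow> dt_depth T \<le> D \<longrightarrow> D \<le> n \<longrightarrow>
       (\<forall>S. \<bar>s S\<bar> \<le> 1) \<longrightarrow> (\<forall>h b. 0 \<le> w h b \<and> w h b \<le> 1) \<longrightarrow>
       walk_exp T [] (\<lambda>h b. w h b * path_deg_part k s h)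
         \<le> walk_exp T [] w * deg_bound n k D (walk_exp T [] w))"

lemma walk_deg_part_boundD:
  assumes "walk_deg_part_bound n k" "nonrepeating T" "dt_vars T \<subseteq> {..<n}" "dt_depth T \<le> D" "D \<le> n"
    "\<And>S. \<bar>s S\<bar> \<le> 1" "\<And>h b. 0 \<le> w h b" "\<And>h b. w h b \<le> 1"
  shows "walk_exp T [] (\<lambda>h b. w h b * path_deg_part k s h)
    \<le> walk_exp T [] w * deg_bound n k D (walk_exp T [] w)"
  using assms unfolding walk_deg_part_bound_def by blast

lemma walk_deg_part_bound_0: "walk_deg_part_bound n 0"
  unfolding walk_deg_part_bound_def
proof (intro allI impI)
  fix T :: dtree and D :: nat and s :: "nat set \<Rightarrow> real" and w :: "path \<Rightarrow> bool \<Rightarrow> real"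
  assume s: "\<forall>S. \<bar>s S\<bar> \<le> 1" and w: "\<forall>h b. 0 \<le> w h b \<and> w h b \<le> 1"
  have "walk_exp T [] (\<lambda>h b. w h b * path_deg_part 0 s h) = s {} * walk_exp T [] w"
    by (simp add: path_deg_part_0 mult.commute flip: walk_exp_cmult)
  also have "\<dots> \<le> 1 * walk_exp T [] w"
    using s w by (intro mult_right_mono walk_exp_nonneg) (auto simp: abs_le_iff)
  finally show "walk_exp T [] (\<lambda>h b. w h b * path_deg_part 0 s h)
    \<le> walk_exp T [] w * deg_bound n 0 D (walk_exp T [] w)"
    by (simp add: deg_bound_def)
qed

lemma level_sum_signed_excess_le:
  fixes j :: nat and \<sigma> :: real
  assumes IH: "walk_deg_part_bound n k" and n: "1 \<le> n" "k < n"
    and T: "nonrepeating T" "dt_vars T \<subseteq> {..<n}" and t: "t \<le> n"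
    and s: "\<And>S. \<bar>s S\<bar> \<le> 1" and w: "\<And>h b. 0 \<le> w h b" "\<And>h b. w h b \<le> 1"
    and \<sigma>: "\<bar>\<sigma>\<bar> = 1" and Q: "0 < Q" "Q \<le> 1 / scale n"
  defines "g \<equiv> \<lambda>h. \<sigma> * path_deg_part k (\<lambda>S. s (insert j S)) h"
    and "M \<equiv> deg_bound n k t Q"
  shows "level_sum T [] t w (\<lambda>h i. if i = j \<and> M < g h then g h else 0) \<le> Q * M"
proof (cases k)
  case 0
  have "g h \<le> M" for h
    using s[of "{j}"] \<sigma> 0 abs_ge_self[of "g h"]
    by (simp add: g_def M_def path_deg_part_0 deg_bound_def abs_mult)
  then have "(\<lambda>h i. if i = j \<and> M < g h then g h else 0) = (\<lambda>h i. 0)"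
    by (auto simp: fun_eq_iff not_less[symmetric])
  then show ?thesis using Q deg_bound_def 0 by (simp add: level_sum_zero M_def)
next
  case (Suc k')
  define c where "c = (\<lambda>h (i::nat). if i = j \<and> M < g h then 1 else (0::real))"
  define \<omega> where "\<omega> = (\<lambda>h (b::bool). level_weight T [] w c h)"
  define q where "q = walk_exp (dt_trunc T t) [] \<omega>"
  have \<omega>: "0 \<le> \<omega> h b" "\<omega> h b \<le> 1" for h b
    unfolding \<omega>_def using level_weight_range[OF w, of c] by (auto simp: c_def)
  have "level_sum T [] t w (\<lambda>h i. if i = j \<and> M < g h then g h else 0)
      = level_sum T [] t w (\<lambda>h i. c h i * g h)"
    by (rule arg_cong[where f="level_sum T [] t w"]) (auto simp: c_def fun_eq_iff)
  also have "\<dots> = walk_exp (dt_trunc T t) [] (\<lambda>h b. \<omega> h b * g h)"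
    unfolding level_sum_mult_eq_walk_exp_trunc \<omega>_def ..
  finally have eq: "level_sum T [] t w (\<lambda>h i. if i = j \<and> M < g h then g h else 0)
      = walk_exp (dt_trunc T t) [] (\<lambda>h b. \<omega> h b * g h)" .
  have "M * \<omega> h b \<le> \<omega> h b * g h" for h b
  proof (cases "\<omega> h b = 0")
    case False
    then have "M < g h" by (auto simp: \<omega>_def level_weight_def c_def split: dtree.splits if_splits)
    then show ?thesis using \<omega>(1)[of h b] by (metis less_imp_le mult.commute mult_right_mono)
  qed simp
  then have lo: "M * q \<le> walk_exp (dt_trunc T t) [] (\<lambda>h b. \<omega> h b * g h)"
    unfolding q_def by (simp add: walk_exp_mono flip: walk_exp_cmult)
  have g_eq: "g = path_deg_part k (\<lambda>S. \<sigma> * s (insert j S))"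
    by (simp add: fun_eq_iff g_def path_deg_part_cmult)
  have hi: "walk_exp (dt_trunc T t) [] (\<lambda>h b. \<omega> h b * g h) \<le> q * deg_bound n k t q"
    unfolding q_def g_eq
  proof (rule walk_deg_part_boundD[OF IH])
    show "nonrepeating (dt_trunc T t)" using T(1) by (rule nonrepeating_dt_trunc)
    show "dt_vars (dt_trunc T t) \<subseteq> {..<n}" using dt_trunc_vars T(2) by blast
    show "dt_depth (dt_trunc T t) \<le> t" by (rule dt_trunc_depth)
    show "\<bar>\<sigma> * s (insert j S)\<bar> \<le> 1" for S using s[of "insert j S"] \<sigma> by (simp add: abs_mult)
  qed (use t \<omega> in auto)
  have "0 \<le> q" "q \<le> 1" unfolding q_def using \<omega> by (auto intro: walk_exp_nonneg walk_exp_le_1)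
  then show ?thesis
    using deg_bound_threshold[OF n(1) _ n(2) _ _ Q meta_eq_to_obj_eq[OF M_def] lo hi] Suc eq by simp
qed

lemma level_sum_excess_le:
  assumes IH: "walk_deg_part_bound n k" and n: "1 \<le> n" "k < n"
    and T: "nonrepeating T" "dt_vars T \<subseteq> {..<n}" and t: "t \<le> n"
    and s: "\<And>S. \<bar>s S\<bar> \<le> 1" and w: "\<And>h b. 0 \<le> w h b" "\<And>h b. w h b \<le> 1"
    and Q: "0 < Q" "Q \<le> 1 / scale n"
  defines "a \<equiv> \<lambda>h i. path_deg_part k (\<lambda>S. s (insert i S)) h"
    and "M \<equiv> deg_bound n k t Q"
  shows "level_sum T [] t w (\<lambda>h i. if \<bar>a h i\<bar> \<le> M then 0 else \<bar>a h i\<bar>) \<le> 2 * real n * Q * M"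
proof -
  have "Q \<le> 1" using Q scale_ge_2[OF n(1)] by (smt (verit) divide_le_eq_1)
  then have M0: "0 \<le> M" unfolding M_def using deg_bound_nonneg[OF n(1) Q(1)] by blast
  let ?piece = "\<lambda>j \<sigma> h i. if i = j \<and> M < \<sigma> * a h j then \<sigma> * a h j else (0::real)"
  have "level_sum T [] t w (\<lambda>h i. if \<bar>a h i\<bar> \<le> M then 0 else \<bar>a h i\<bar>)
      = level_sum T [] t w (\<lambda>h i. \<Sum>j<n. \<Sum>\<sigma>\<in>{-1,1}. ?piece j \<sigma> h i)"
  proof (rule level_sum_cong)
    fix ext :: path and i assume "i \<in> dt_vars T"
    then have "i < n" using T(2) by auto
    then have "(\<Sum>j<n. \<Sum>\<sigma>\<in>{-1,1}. ?piece j \<sigma> (ext @ []) i)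
        = (\<Sum>\<sigma>\<in>{-1,1::real}. if M < \<sigma> * a (ext @ []) i then \<sigma> * a (ext @ []) i else 0)"
      by (subst sum.swap) (simp flip: if_if_eq_conj)
    also have "\<dots> = (if \<bar>a (ext @ []) i\<bar> \<le> M then 0 else \<bar>a (ext @ []) i\<bar>)"
      using M0 by auto
    finally show "(if \<bar>a (ext @ []) i\<bar> \<le> M then 0 else \<bar>a (ext @ []) i\<bar>)
        = (\<Sum>j<n. \<Sum>\<sigma>\<in>{-1,1}. ?piece j \<sigma> (ext @ []) i)" by simp
  qed
  also have "\<dots> = (\<Sum>j<n. \<Sum>\<sigma>\<in>{-1,1}. level_sum T [] t w (?piece j \<sigma>))"
    by (simp only: level_sum_sum finite_lessThan finite_insert finite.emptyI simp_thms)
  also have "\<dots> \<le> (\<Sum>j<n. \<Sum>\<sigma>\<in>{-1,1::real}. Q * M)"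
  proof (intro sum_mono)
    fix j \<sigma> assume "\<sigma> \<in> {-1, 1::real}"
    then have "\<bar>\<sigma>\<bar> = 1" by auto
    from level_sum_signed_excess_le[OF IH n T t s w this Q, where j = j]
    show "level_sum T [] t w (?piece j \<sigma>) \<le> Q * M" unfolding a_def M_def .
  qed
  also have "\<dots> = 2 * real n * Q * M" by simp
  finally show ?thesis .
qed

lemma edge_sum_excess_le:
  assumes IH: "walk_deg_part_bound n k" and n: "1 \<le> n" "k < n"
    and T: "nonrepeating T" "dt_vars T \<subseteq> {..<n}" "dt_depth T \<le> D" and D: "D \<le> n"
    and s: "\<And>S. \<bar>s S\<bar> \<le> 1" and w: "\<And>h b. 0 \<le> w h b" "\<And>h b. w h b \<le> 1"
    and P: "P = walk_exp T [] w" "0 < P"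
  defines "a \<equiv> \<lambda>h i. path_deg_part k (\<lambda>S. s (insert i S)) h"
    and "M \<equiv> \<lambda>t. deg_bound n k t (P / scale n)"
  shows "edge_sum T [] w (\<lambda>h i b. if \<bar>a h i\<bar> \<le> M (length h) then 0 else \<bar>a h i\<bar>)
    \<le> P * deg_bound n (Suc k) D P / 3"
proof -
  define Q where "Q = P / scale n"
  define \<beta> where "\<beta> = deg_bound n (Suc k) D P"
  have P1: "P \<le> 1" using P w walk_exp_le_1 by auto
  have Q: "0 < Q" "Q \<le> 1 / scale n"
    using P P1 scale_ge_2[OF n(1)] by (auto simp: Q_def divide_right_mono)
  have \<beta>0: "0 \<le> \<beta>" unfolding \<beta>_def using deg_bound_nonneg[OF n(1) P(2) P1] .
  have level: "level_sum T [] t w (\<lambda>h i. if \<bar>a h i\<bar> \<le> M (length h) then 0 else \<bar>a h i\<bar>)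
      \<le> 2 * real n * Q * (\<beta> / 3)" if "t < dt_depth T" for t
  proof -
    have "t < D" "t \<le> n" using that T(3) D by auto
    have "(M t)\<^sup>2 \<le> (\<beta> / 3)\<^sup>2"
      using deg_bound_sq_le[OF n(1) P(2) P1 \<open>t < D\<close>] by (simp add: M_def \<beta>_def power_divide)
    then have "M t \<le> \<beta> / 3" by (rule power2_le_imp_le) (use \<beta>0 in simp)
    have "level_sum T [] t w (\<lambda>h i. if \<bar>a h i\<bar> \<le> M (length h) then 0 else \<bar>a h i\<bar>)
        = level_sum T [] t w (\<lambda>h i. if \<bar>a h i\<bar> \<le> M t then 0 else \<bar>a h i\<bar>)"
      by (rule level_sum_cong) simp
    also have "\<dots> \<le> 2 * real n * Q * M t"
      unfolding a_def M_def Q_def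
      using level_sum_excess_le[OF IH n T(1,2) \<open>t \<le> n\<close> s w Q[unfolded Q_def]] .
    also have "\<dots> \<le> 2 * real n * Q * (\<beta> / 3)"
      using \<open>M t \<le> \<beta> / 3\<close> Q by (intro mult_left_mono) auto
    finally show ?thesis .
  qed
  have "edge_sum T [] w (\<lambda>h i b. if \<bar>a h i\<bar> \<le> M (length h) then 0 else \<bar>a h i\<bar>)
      = (\<Sum>t<dt_depth T. level_sum T [] t w (\<lambda>h i. if \<bar>a h i\<bar> \<le> M (length h) then 0 else \<bar>a h i\<bar>))"
    by (rule edge_sum_eq_sum_level_sum)
  also have "\<dots> \<le> real (dt_depth T) * (2 * real n * Q * (\<beta> / 3))"
    using sum_mono[of "{..<dt_depth T}", OF level] by simp
  also have "\<dots> \<le> real n * (2 * real n * Q * (\<beta> / 3))"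
    using T(3) D Q \<beta>0 by (intro mult_right_mono) auto
  also have "\<dots> = P * \<beta> / 3 / real n"
    using n by (simp add: Q_def scale_def field_simps power3_eq_cube)
  also have "\<dots> \<le> P * \<beta> / 3 / 1"
    using n(1) P(2) \<beta>0 by (intro divide_left_mono) auto
  finally show ?thesis by (simp add: \<beta>_def)
qed

lemma edge_sum_small_increments_le:
  fixes k :: nat and a :: "path \<Rightarrow> nat \<Rightarrow> real"
  assumes n: "1 \<le> n" and T: "dt_depth T \<le> D" and w: "\<And>h b. 0 \<le> w h b" "\<And>h b. w h b \<le> 1"
    and P: "P = walk_exp T [] w" "0 < P"
  defines "M \<equiv> \<lambda>t. deg_bound n k t (P / scale n)"
  shows "edge_sum T [] w (\<lambda>h i b. real_of_int b * (if \<bar>a h i\<bar> \<le> M (length h) then a h i else 0))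
    \<le> 2 * P * deg_bound n (Suc k) D P / 3"
proof -
  have P1: "P \<le> 1" using P w walk_exp_le_1 by auto
  have "P / scale n \<le> 1" using P1 scale_ge_2[OF n] by (simp add: divide_le_eq)
  then have M0: "0 \<le> M t" for t
    unfolding M_def using P(2) scale_ge_2[OF n] by (intro deg_bound_nonneg[OF n]) auto
  have "- ln P \<le> log_factor n 0 P" using P(2) by (simp add: log_factor_def ln_div)
  then have "edge_sum T [] w (\<lambda>h i b. real_of_int b * (if \<bar>a h i\<bar> \<le> M (length h) then a h i else 0))
      \<le> 2 * P * sqrt (log_factor n 0 P * (\<Sum>t<D. (M t)\<^sup>2))"
    using M0 log_factor_ge_1[OF n P(2) P1, of 0]
    by (intro edge_sum_bounded_increments_le[OF w _ T P]) auto
  also have "log_factor n 0 P * (\<Sum>t<D. (M t)\<^sup>2) = (deg_bound n (Suc k) D P / 3)\<^sup>2"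
    using log_factor_sum_deg_bound_sq[OF n P(2) P1, of k D] by (simp add: M_def power_divide)
  finally show ?thesis using deg_bound_nonneg[OF n P(2) P1] by simp
qed

lemma walk_deg_part_bound_Suc:
  assumes IH: "walk_deg_part_bound n k" and k: "Suc k \<le> n"
  shows "walk_deg_part_bound n (Suc k)"
  unfolding walk_deg_part_bound_def
proof (intro allI impI)
  fix T :: dtree and D :: nat and s :: "nat set \<Rightarrow> real" and w :: "path \<Rightarrow> bool \<Rightarrow> real"
  assume T: "nonrepeating T" "dt_vars T \<subseteq> {..<n}" "dt_depth T \<le> D" and D: "D \<le> n"
    and s: "\<forall>S. \<bar>s S\<bar> \<le> 1" and w: "\<forall>h b. 0 \<le> w h b \<and> w h b \<le> 1"
  define P where "P = walk_exp T [] w"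
  define \<beta> where "\<beta> = deg_bound n (Suc k) D P"
  define a where "a = (\<lambda>h i. path_deg_part k (\<lambda>S. s (insert i S)) h)"
  define M where "M = (\<lambda>t. deg_bound n k t (P / scale n))"
  have w0: "\<And>h b. 0 \<le> w h b" and w1: "\<And>h b. w h b \<le> 1" using w by auto
  have n: "1 \<le> n" "k < n" using k by auto
  show "walk_exp T [] (\<lambda>h b. w h b * path_deg_part (Suc k) s h) \<le> P * \<beta>"
  proof (cases "P = 0")
    case True
    then show ?thesis using walk_exp_weight_zero[OF w0] by (simp add: P_def)
  next
    case False
    then have P: "0 < P" using walk_exp_nonneg[of w T "[]", OF w0] by (simp add: P_def less_le)
    have "walk_exp T [] (\<lambda>h b. w h b * path_deg_part (Suc k) s h)
        = edge_sum T [] w (\<lambda>h i b. real_of_int b * a h i)"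
      using walk_exp_deg_part_martingale[OF T(1), of "[]" w k s] by (simp add: path_deg_part_Nil a_def)
    also have "\<dots> = edge_sum T [] w (\<lambda>h i b. real_of_int b * (if \<bar>a h i\<bar> \<le> M (length h) then a h i else 0))
        + edge_sum T [] w (\<lambda>h i b. real_of_int b * (if \<bar>a h i\<bar> \<le> M (length h) then 0 else a h i))"
      by (subst edge_sum_add[symmetric])
        (auto intro!: arg_cong[where f="edge_sum T [] w"] simp: fun_eq_iff)
    also have "\<dots> \<le> 2 * P * \<beta> / 3 + P * \<beta> / 3"
    proof (rule add_mono)
      show "edge_sum T [] w (\<lambda>h i b. real_of_int b * (if \<bar>a h i\<bar> \<le> M (length h) then a h i else 0))
          \<le> 2 * P * \<beta> / 3"
        unfolding M_def \<beta>_def by (rule edge_sum_small_increments_le[OF n(1) T(3) w0 w1 P_def P])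
      have "edge_sum T [] w (\<lambda>h i b. real_of_int b * (if \<bar>a h i\<bar> \<le> M (length h) then 0 else a h i))
          \<le> edge_sum T [] w (\<lambda>h i b. if \<bar>a h i\<bar> \<le> M (length h) then 0 else \<bar>a h i\<bar>)"
        by (rule edge_sum_mono[OF w0]) auto
      also have "\<dots> \<le> P * \<beta> / 3"
        unfolding a_def M_def \<beta>_def
        using s by (intro edge_sum_excess_le[OF IH n T D _ w0 w1 P_def P]) auto
      finally show "edge_sum T [] w (\<lambda>h i b. real_of_int b * (if \<bar>a h i\<bar> \<le> M (length h) then 0 else a h i))
          \<le> P * \<beta> / 3" .
    qed
    also have "\<dots> = P * \<beta>" by simp
    finally show ?thesis .
  qed
qed

lemma walk_deg_part_bound_le: "k \<le> n \<Longrightarrow> walk_deg_part_bound n k"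
  by (induction k) (auto intro: walk_deg_part_bound_0 walk_deg_part_bound_Suc)

lemma real_sqrt_prod:
  fixes f :: "nat \<Rightarrow> real"
  shows "(\<And>i. i < l \<Longrightarrow> 0 \<le> f i) \<Longrightarrow> sqrt (\<Prod>i<l. f i) = (\<Prod>i<l. sqrt (f i))"
  by (induction l) (auto simp: real_sqrt_mult)

lemma ln_4_power_div_nonneg:
  assumes "0 \<le> p" "p \<le> 1"
  shows "0 \<le> ln (4 * real n ^ i / p)"
proof (cases "p = 0 \<or> real n ^ i = 0")
  case False
  then have "1 \<le> real n ^ i" by (cases n) auto
  then show ?thesis using False assms by (simp add: le_divide_eq)
qed (auto simp: power_0_left)

lemma ln_4_power_div:
  assumes "1 \<le> n" "0 < p"
  shows "ln (4 * real n ^ i / p) = ln 4 + real i * ln (real n) - ln p"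
proof -
  have "ln (4 * real n ^ i / p) = ln (4 * real n ^ i) - ln p" using assms by (simp add: ln_div)
  also have "ln (4 * real n ^ i) = ln 4 + ln (real n ^ i)" using assms by (intro ln_mult_pos) auto
  also have "ln (real n ^ i) = real i * ln (real n)" using assms by (intro ln_realpow)
  finally show ?thesis .
qed

lemma log_factor_expand:
  assumes "1 \<le> n" "0 < p"
  shows "log_factor n i p = ln 4 + real i * ln 2 + 3 * real i * ln (real n) - ln p"
proof -
  have N: "0 < scale n" using scale_ge_2[OF assms(1)] by simp
  have "log_factor n i p = ln (4 * scale n ^ i) - ln p" unfolding log_factor_def using assms N by (simp add: ln_div)
  also have "ln (4 * scale n ^ i) = ln 4 + ln (scale n ^ i)" using N by (intro ln_mult_pos) auto
  also have "ln (scale n ^ i) = real i * ln (scale n)" using N by (intro ln_realpow)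
  also have "ln (scale n) = ln 2 + ln (real n ^ 3)" unfolding scale_def using assms by (intro ln_mult_pos) auto
  also have "ln (real n ^ 3) = 3 * ln (real n)" using assms by (subst ln_realpow) auto
  finally show ?thesis by (simp add: algebra_simps)
qed

lemma log_factor_le_4_ln:
  assumes "1 \<le> n" "i < n" "0 < p" "p \<le> 1"
  shows "log_factor n i p \<le> 4 * ln (4 * real n ^ i / p)"
proof -
  have "ln p \<le> 0" using assms(3,4) by simp
  have "real i * ln 2 \<le> real i * ln (real n)"
  proof (cases "n = 1")
    case False
    then have "ln 2 \<le> ln (real n)" using assms(1) by simp
    then show ?thesis by (intro mult_left_mono) auto
  qed (use assms(2) in simp)
  then show ?thesis
    using log_factor_expand[OF assms(1,3), of i] ln_4_power_div[OF assms(1,3), of i] one_le_ln_4 \<open>ln p \<le> 0\<close>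
    by (simp add: algebra_simps)
qed

lemma deg_bound_le_final:
  assumes "l \<le> n" "0 < p" "p \<le> 1" "D \<le> d"
  shows "deg_bound n l D p \<le> sqrt (36 ^ l * real (d choose l)) * (\<Prod>i<l. sqrt (ln (4 * real n ^ i / p)))"
proof (cases "n = 0")
  case True
  then show ?thesis using assms(1) by (simp add: deg_bound_def)
next
  case False
  then have n: "1 \<le> n" by simp
  have "(\<Prod>i<l. log_factor n i p) \<le> (\<Prod>i<l. 4 * ln (4 * real n ^ i / p))"
    using log_factor_le_4_ln[OF n _ assms(2,3)] log_factor_ge_1[OF n assms(2,3)] assms(1)
    by (intro prod_mono) (meson dual_order.trans zero_le_one lessThan_iff order.strict_trans2)
  also have "\<dots> = 4 ^ l * (\<Prod>i<l. ln (4 * real n ^ i / p))" by (simp add: prod.distrib)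
  finally have "(\<Prod>i<l. log_factor n i p) \<le> 4 ^ l * (\<Prod>i<l. ln (4 * real n ^ i / p))" .
  moreover have "real (D choose l) \<le> real (d choose l)" using assms(4) by (simp add: binomial_right_mono)
  ultimately have "9 ^ l * real (D choose l) * (\<Prod>i<l. log_factor n i p)
      \<le> 9 ^ l * real (d choose l) * (4 ^ l * (\<Prod>i<l. ln (4 * real n ^ i / p)))"
    using prod_log_factor_nonneg[OF n assms(2,3)] by (intro mult_mono) auto
  also have "\<dots> = 36 ^ l * real (d choose l) * (\<Prod>i<l. ln (4 * real n ^ i / p))"
    by (simp add: power_mult_distrib[symmetric] mult_ac)
  finally have "deg_bound n l D p \<le> sqrt (36 ^ l * real (d choose l) * (\<Prod>i<l. ln (4 * real n ^ i / p)))"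
    unfolding deg_bound_def by simp
  also have "\<dots> = sqrt (36 ^ l * real (d choose l)) * (\<Prod>i<l. sqrt (ln (4 * real n ^ i / p)))"
    using ln_4_power_div_nonneg[of p] assms(2,3) by (simp add: real_sqrt_mult real_sqrt_prod)
  finally show ?thesis .
qed

lemma nonrepeating_tree_exists:
  assumes "dt_computes n T f"
  obtains T' where "nonrepeating T'" "dt_vars T' \<subseteq> {..<n}" "dt_depth T' \<le> dt_depth T"
    "dt_depth T' \<le> n" "\<And>x. x \<in> cube n \<Longrightarrow> f x = dt_eval T' x"
proof
  let ?T' = "prune T []"
  show "nonrepeating ?T'" by (rule nonrepeating_prune)
  show vars: "dt_vars ?T' \<subseteq> {..<n}" using prune_vars[of T "[]"] assms by (auto simp: dt_computes_def)
  show "dt_depth ?T' \<le> dt_depth T" by (rule prune_depth)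
  have "dt_depth ?T' \<le> card (dt_vars ?T')" by (rule nonrepeating_depth_le_card[OF nonrepeating_prune])
  also have "\<dots> \<le> n" using card_mono[OF finite_lessThan vars] by simp
  finally show "dt_depth ?T' \<le> n" .
  fix x assume x: "x \<in> cube n"
  have "x j = -1 \<or> x j = 1" for j using x unfolding cube_def by (cases "j < n") auto
  then show "f x = dt_eval ?T' x" using assms x by (simp add: prune_eval dt_computes_def)
qed

lemma cube_expect_eq_walk_exp:
  assumes "nonrepeating T" "dt_vars T \<subseteq> {..<n}" "\<And>x. x \<in> cube n \<Longrightarrow> f x = dt_eval T x"
  shows "cube_expect n f = walk_exp T [] (\<lambda>h b. if b then 1 else 0)"
proof -
  have "(\<Sum>x\<in>cube n. f x) = (\<Sum>x\<in>cube n. dt_eval T x * deg_part 0 (\<lambda>_. 1) {..<n} x)"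
    using assms(3) by (simp add: deg_part_0)
  also have "\<dots> = 2 ^ n * walk_exp T []
      (\<lambda>h b. (if b then 1 else 0) * deg_part 0 (\<lambda>_. 1) (path_vars h) (path_point h))"
    by (rule sum_cube_dt_eval_deg_part[OF assms(1,2)])
  finally show ?thesis by (simp add: cube_expect_def deg_part_0)
qed

lemma sum_abs_fourier_coeff_eq_walk_exp:
  assumes "nonrepeating T" "dt_vars T \<subseteq> {..<n}" "\<And>x. x \<in> cube n \<Longrightarrow> f x = dt_eval T x"
  shows "(\<Sum>S\<in>{S. S \<subseteq> {..<n} \<and> card S = l}. \<bar>fourier_coeff n f S\<bar>)
    = walk_exp T [] (\<lambda>h b. (if b then 1 else 0) * path_deg_part l (\<lambda>S. sgn (fourier_coeff n f S)) h)"
proof -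
  define s where "s = (\<lambda>S. sgn (fourier_coeff n f S))"
  let ?\<S> = "{S. S \<subseteq> {..<n} \<and> card S = l}"
  have "(\<Sum>S\<in>?\<S>. \<bar>fourier_coeff n f S\<bar>) = (\<Sum>S\<in>?\<S>. s S * fourier_coeff n f S)"
    unfolding s_def by (intro sum.cong refl) (simp add: abs_if sgn_if)
  also have "\<dots> = (\<Sum>S\<in>?\<S>. \<Sum>x\<in>cube n. s S * (f x * (\<Prod>i\<in>S. real_of_int (x i)))) / 2 ^ n"
    unfolding fourier_coeff_def cube_expect_def by (simp add: sum_divide_distrib sum_distrib_left)
  also have "(\<Sum>S\<in>?\<S>. \<Sum>x\<in>cube n. s S * (f x * (\<Prod>i\<in>S. real_of_int (x i))))
      = (\<Sum>x\<in>cube n. dt_eval T x * deg_part l s {..<n} x)"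
    unfolding deg_part_def by (subst sum.swap) (simp add: assms(3) sum_distrib_left mult_ac)
  also have "\<dots> = 2 ^ n * walk_exp T [] (\<lambda>h b. (if b then 1 else 0) * path_deg_part l s h)"
    unfolding path_deg_part_def by (rule sum_cube_dt_eval_deg_part[OF assms(1,2)])
  finally show ?thesis by (simp add: s_def)
qed

lemma sum_abs_fourier_coeff_le_deg_bound:
  assumes "dt_computes n T f" "l \<le> n"
  shows "(\<Sum>S\<in>{S. S \<subseteq> {..<n} \<and> card S = l}. \<bar>fourier_coeff n f S\<bar>)
    \<le> cube_expect n f * deg_bound n l (min (dt_depth T) n) (cube_expect n f)"
proof -
  obtain T' where T': "nonrepeating T'" "dt_vars T' \<subseteq> {..<n}" "dt_depth T' \<le> dt_depth T"
    "dt_depth T' \<le> n" "\<And>x. x \<in> cube n \<Longrightarrow> f x = dt_eval T' x"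
    using nonrepeating_tree_exists[OF assms(1)] by blast
  let ?w = "\<lambda>(h::path) (b::bool). if b then 1 else (0::real)"
  have "(\<Sum>S\<in>{S. S \<subseteq> {..<n} \<and> card S = l}. \<bar>fourier_coeff n f S\<bar>)
      = walk_exp T' [] (\<lambda>h b. ?w h b * path_deg_part l (\<lambda>S. sgn (fourier_coeff n f S)) h)"
    by (rule sum_abs_fourier_coeff_eq_walk_exp[OF T'(1,2,5)])
  also have "\<dots> \<le> walk_exp T' [] ?w * deg_bound n l (min (dt_depth T) n) (walk_exp T' [] ?w)"
    using T'(3,4) by (intro walk_deg_part_boundD[OF walk_deg_part_bound_le[OF assms(2)] T'(1,2)])
      (auto simp: abs_sgn_eq)
  finally show ?thesis by (simp only: cube_expect_eq_walk_exp[OF T'(1,2,5)])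
qed

lemma cube_expect_dt_range:
  assumes "dt_computes n T f"
  shows "0 \<le> cube_expect n f" "cube_expect n f \<le> 1"
proof -
  obtain T' where "nonrepeating T'" "dt_vars T' \<subseteq> {..<n}" "\<And>x. x \<in> cube n \<Longrightarrow> f x = dt_eval T' x"
    using nonrepeating_tree_exists[OF assms] by blast
  then show "0 \<le> cube_expect n f" "cube_expect n f \<le> 1"
    by (simp_all add: cube_expect_eq_walk_exp walk_exp_nonneg walk_exp_le_1)
qed

theorem mainTheorem7:
  shows "\<exists>c::real. c > 0 \<and>
    (\<forall>(n::nat) (d::nat) (T::dtree) (f::(nat \<Rightarrow> int) \<Rightarrow> real) (p::real) (l::nat).
       (\<forall>x\<in>cube n. f x \<in> {0, 1}) \<longrightarrow>
       dt_computes n T f \<longrightarrow>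
       dt_depth T = d \<longrightarrow>
       p = cube_expect n f \<longrightarrow>
       l \<le> d \<longrightarrow>
       (\<Sum>S\<in>{S. S \<subseteq> {..<n} \<and> card S = l}. \<bar>fourier_coeff n f S\<bar>)
         \<le> sqrt (c ^ l * real (d choose l)) * p *
            (\<Prod>i<l. sqrt (ln (4 * real n ^ i / p))))"
proof (intro exI[of _ 36] conjI allI impI)
  fix n d T f p l
  assume "\<forall>x\<in>cube n. f x \<in> {0, 1}" and T: "dt_computes n T f" "dt_depth T = d"
    and p: "p = cube_expect n f" and "l \<le> d"
  let ?lhs = "\<Sum>S\<in>{S. S \<subseteq> {..<n} \<and> card S = l}. \<bar>fourier_coeff n f S\<bar>"
  let ?rhs = "sqrt (36 ^ l * real (d choose l)) * p * (\<Prod>i<l. sqrt (ln (4 * real n ^ i / p)))"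
  have p01: "0 \<le> p" "p \<le> 1" using cube_expect_dt_range[OF T(1)] p by auto
  then have rhs_nonneg: "0 \<le> ?rhs" using ln_4_power_div_nonneg by (simp add: prod_nonneg)
  show "?lhs \<le> ?rhs"
  proof (cases "l \<le> n")
    case True
    then have "?lhs \<le> p * deg_bound n l (min d n) p"
      using sum_abs_fourier_coeff_le_deg_bound[OF T(1)] T(2) p by simp
    also have "\<dots> \<le> p * (sqrt (36 ^ l * real (d choose l)) * (\<Prod>i<l. sqrt (ln (4 * real n ^ i / p))))"
      using deg_bound_le_final[OF True _ p01(2), of "min d n" d] p01(1)
      by (cases "p = 0") (auto intro: mult_left_mono)
    finally show ?thesis by (simp only: mult_ac)
  next
    case False
    then have "{S. S \<subseteq> {..<n} \<and> card S = l} = {}" using card_mono[of "{..<n}"] by fastforce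
    then have "?lhs = 0" by (simp only: sum.empty)
    then show ?thesis using rhs_nonneg by simp
  qed
qed (simp)

end
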